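(* Let $K$ be a kernel as in the context, and let $h_n,\varepsilon_n\to0$, $H_n\to\infty$ with $h_n\sim\exp(-n^{\vartheta_h})$ for some $\vartheta_h<1/4$, $h_n\varepsilon_n^{-1}=o(1)$ and $h_nH_n=o(1)$ (and $\varepsilon_n<1/2$, $|H_n-j|>\varepsilon_n$ for all $j\in\mathbb{Z}$). Then there is $\delta>0$ with $\log(h_n^{-1})/n^{1/(1+2\delta)}\to0$ such that, for every $c\ne0$, $j\in\mathbb{Z}\setminus\{0\}$ and $t\in\mathbb{R}$, each of the functions $g_n\in\{f^{(\lambda)}_n,f^{(\gamma)}_n,f^{(q_j)}_n,f^{(N)}_{t,n}\}$ is bounded, belongs to $L^2(\mathbb{R})$, and satisfies (i) $\int_{-h_n^{-1}}^{h_n^{-1}}|\mathcal{F}g_n(u)|du=o\big(n^{1/2}(\log h_n^{-1})^{-(1+2\delta)}\big)$, with the implicit constant not depending on $t$ (for $f^{(N)}_{t,n}$) or $j$ (for $f^{(q_j)}_n$); (ii) $\sup_n\sup_x|g_n(x)|<\infty$; (iii) $\lim_{n}g_n*K_{h_n}$ exists at every point. Moreover, pointwise on $\mathbb{R}$, $$\lim_n f^{(\lambda)}_n*K_{h_n}=\mathbf{1}_{\mathbb{R}\setminus\{0\}},\quad \lim_nf^{(\gamma)}_n*K_{h_n}=0,\quad \lim_nf^{(q_j)}_n*K_{h_n}=\mathbf{1}_{\{j\}}\ (j\in\mathbb{Z}),$$ $$l_t:=\lim_nf^{(N)}_{t,n}*K_{h_n}=\mathbf{1}_{(-\infty,t]}\mathbf{1}_{\mathbb{R}\setminus\{0\}}-\tfrac12\mathbf{1}_{\{t\}}\mathbf{1}_{\mathbb{R}\setminus\mathbb{Z}}(t).$$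 Furthermore, for a finite set $\mathcal T\subset\mathbb{R}$, constants $C_{(\lambda)},C_{(\gamma)},C_{(j)}$ ($j\in\mathbb{Z}\setminus\{0\}$), $C_t$ ($t\in\mathcal T$), and $\widetilde H_n\to\infty$, the function $$f_{t,n}:=C_{(\lambda)}f^{(\lambda)}_n+C_{(\gamma)}f^{(\gamma)}_n+\sum_{0<|j|\le\widetilde H_n}C_{(j)}f^{(q_j)}_n+\sum_{t\in\mathcal T}C_tf^{(N)}_{t,n}$$ enjoys the same properties (boundedness, $L^2$, (i)–(iii)) if either (a) only finitely many $C_{(j)}$ are nonzero, or (b) $\sup_j|C_{(j)}|<\infty$, $\widetilde H_n\sim n^{\vartheta_{\widetilde H}}$ with $\vartheta_{\widetilde H}<1/2$ and $\vartheta_h<(1-2\vartheta_{\widetilde H})/4$; in both cases $$\lim_nf_{t,n}*K_{h_n}=C_{(\lambda)}\mathbf{1}_{\mathbb{R}\setminus\{0\}}+\sum_{j\in\mathbb{Z}\setminus\{0\}}C_{(j)}\mathbf{1}_{\{j\}}+\sum_{t\in\mathcal T}C_tl_t\quad\text{pointwise}.$$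
   Context: Kernel $K$: symmetric, $\int K=1$, $\mathrm{supp}\mathcal{F}K\subseteq[-1,1]$, $|K(x)|\le C'(1+|x|)^{-\eta}$ for some $\eta>2$; $K_h=h^{-1}K(\cdot/h)$; $\mathcal{F}f(u)=\int e^{iux}f(x)dx$. $a_n\sim b_n$: mutually $\lesssim$. Functions: $f^{(\lambda)}_n=\mathbf{1}_{\{\varepsilon_n\le|x|\le H_n\}}$; $f^{(\gamma)}_n(x)=c^{-1}x\mathbf{1}_{\{|x|<h_n\}}$; $f^{(q_j)}_n=\mathbf{1}_{\{|x-j|<\varepsilon_n\}}$, $j\in\mathbb{Z}$; $f^{(N)}_{t,n}=\mathbf{1}_{[-H_n,H_n]\setminus(-\varepsilon_n,\varepsilon_n)}g_{t,n}$ with $g_{t,n}=\mathbf{1}_{(-\infty,t]}$ if $|t-j|>\varepsilon_n$ for all $j\in\mathbb{Z}$, $g_{t,n}=\mathbf{1}_{(-\infty,j-\varepsilon_n]}$ if $j-\varepsilon_n\le t<j$, $g_{t,n}=\mathbf{1}_{(-\infty,j+\varepsilon_n]}$ if $j\le t\le j+\varepsilon_n$, for some $j\in\mathbb{Z}$. *)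

theory Defs
  imports "HOL-Analysis.Analysis" "HOL-Library.Landau_Symbols"
begin

definition FT :: "(real \<Rightarrow> real) \<Rightarrow> real \<Rightarrow> complex" where
  "FT f u = (LINT x|lborel. cis (u * x) * complex_of_real (f x))"

definition Kh :: "(real \<Rightarrow> real) \<Rightarrow> real \<Rightarrow> real \<Rightarrow> real" where
  "Kh K h x = K (x / h) / h"

definition conv :: "(real \<Rightarrow> real) \<Rightarrow> (real \<Rightarrow> real) \<Rightarrow> real \<Rightarrow> real" where
  "conv f g x = (LINT y|lborel. f (x - y) * g y)"

definition f_lambda :: "real \<Rightarrow> real \<Rightarrow> real \<Rightarrow> real" where
  "f_lambda eps H x = (if eps \<le> \<bar>x\<bar> \<and> \<bar>x\<bar> \<le> H then 1 else 0)"

definition f_gamma :: "real \<Rightarrow> real \<Rightarrow> real \<Rightarrow> real" where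
  "f_gamma c h x = (if \<bar>x\<bar> < h then x / c else 0)"

definition f_q :: "int \<Rightarrow> real \<Rightarrow> real \<Rightarrow> real" where
  "f_q j eps x = (if \<bar>x - of_int j\<bar> < eps then 1 else 0)"

definition thr :: "real \<Rightarrow> real \<Rightarrow> real" where
  "thr eps t =
    (if \<exists>j::int. of_int j - eps \<le> t \<and> t < of_int j
     then of_int (SOME j::int. of_int j - eps \<le> t \<and> t < of_int j) - eps
     else if \<exists>j::int. of_int j \<le> t \<and> t \<le> of_int j + eps
     then of_int (SOME j::int. of_int j \<le> t \<and> t \<le> of_int j + eps) + eps
     else t)"

definition g_N :: "real \<Rightarrow> real \<Rightarrow> real \<Rightarrow> real" where
  "g_N eps t x = (if x \<le> thr eps t then 1 else 0)"

definition f_N :: "real \<Rightarrow> real \<Rightarrow> real \<Rightarrow> real \<Rightarrow> real" where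
  "f_N eps H t x = (if eps \<le> \<bar>x\<bar> \<and> \<bar>x\<bar> \<le> H then g_N eps t x else 0)"

definition l_lim :: "real \<Rightarrow> real \<Rightarrow> real" where
  "l_lim t x = indicator {..t} x * indicator (- {0}) x
               - 1/2 * indicator {t} x * indicator (- \<int>) t"

definition FI :: "(real \<Rightarrow> real) \<Rightarrow> real \<Rightarrow> real" where
  "FI g h = (LINT u:{-(1/h)..1/h}|lborel. cmod (FT g u))"

definition rate :: "(nat \<Rightarrow> real) \<Rightarrow> real \<Rightarrow> nat \<Rightarrow> real" where
  "rate h \<delta> n = sqrt (real n) * (ln (1 / h n)) powr (- (1 + 2 * \<delta>))"

text \<open>The properties: bounded, L^2, (i) with o-constant uniform over the index set I,
  (ii) uniform sup bound, (iii) pointwise convergence of g_n * K_{h_n}.\<close>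
definition props ::
  "(real \<Rightarrow> real) \<Rightarrow> (nat \<Rightarrow> real) \<Rightarrow> real \<Rightarrow> ('i \<Rightarrow> nat \<Rightarrow> real \<Rightarrow> real) \<Rightarrow> 'i set \<Rightarrow> bool" where
  "props K h \<delta> G I \<longleftrightarrow>
     (\<forall>i\<in>I. \<forall>n. G i n \<in> borel_measurable borel \<and> bounded (range (G i n))
                  \<and> integrable lborel (\<lambda>x. (G i n x)\<^sup>2)) \<and>
     (\<forall>e>0. eventually (\<lambda>n. \<forall>i\<in>I. FI (G i n) (h n) \<le> e * rate h \<delta> n) sequentially) \<and>
     (\<forall>i\<in>I. \<exists>B. \<forall>n x. \<bar>G i n x\<bar> \<le> B) \<and>
     (\<forall>i\<in>I. \<forall>x. convergent (\<lambda>n. conv (G i n) (Kh K (h n)) x))"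

definition f_comb ::
  "real \<Rightarrow> real \<Rightarrow> real \<Rightarrow> (int \<Rightarrow> real) \<Rightarrow> real set \<Rightarrow> (real \<Rightarrow> real) \<Rightarrow> real
   \<Rightarrow> real \<Rightarrow> real \<Rightarrow> real \<Rightarrow> real \<Rightarrow> real" where
  "f_comb c Cl Cg Cj T Ct eps H h Ht x =
     Cl * f_lambda eps H x + Cg * f_gamma c h x
     + (\<Sum>j\<in>{j::int. 0 < \<bar>j\<bar> \<and> of_int \<bar>j\<bar> \<le> Ht}. Cj j * f_q j eps x)
     + (\<Sum>t\<in>T. Ct t * f_N eps H t x)"

end

theory Submission
  imports Defs
begin

text \<open>Every test function is a combination of indicators of intervals of length at most
  \<open>H n + 1\<close>, plus the tiny function \<open>f_gamma\<close> whose Fourier transform is \<open>O(h n\<^sup>2)\<close>.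
  The Fourier transform of such an indicator is bounded by both the length and \<open>2 / \<bar>u\<bar>\<close>;
  integrating this over \<open>[-1/h n, 1/h n]\<close> gives \<open>O(ln (1 / h n))\<close> because \<open>h n * H n \<rightarrow> 0\<close>.
  The coefficients have total weight \<open>O(n powr q)\<close> and \<open>ln (1 / h n) = O(n powr p)\<close> with
  \<open>2 p + q < 1/2\<close>, which leaves room for the rate \<open>sqrt n / ln (1 / h n) powr (1 + 2 \<delta>)\<close>.

  For the pointwise limits substitute \<open>y = h n * z\<close> in the convolution: for each \<open>z \<noteq> 0\<close> the
  value \<open>g n (x - h n * z)\<close> is eventually constant, with a value depending only on the sign of
  \<open>z\<close>, and dominated convergence against the symmetric kernel averages the two one-sided
  values.\<close>

section \<open>Kernel smoothing of functions with one-sided limits\<close>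

locale symmetric_kernel =
  fixes K :: "real \<Rightarrow> real"
  assumes K_integrable: "integrable lborel K"
    and K_symmetric: "\<And>x. K (- x) = K x"
    and K_integral: "(LINT x|lborel. K x) = 1"
begin

lemma K_measurable [measurable]: "K \<in> borel_measurable borel"
  using borel_measurable_integrable[OF K_integrable] by simp

lemma conv_Kh_rescale:
  assumes h: "h > 0"
  shows "conv g (Kh K h) x = (LINT z|lborel. g (x - h * z) * K z)"
proof -
  have "conv g (Kh K h) x = (LINT y|lborel. g (x - y) * (K (y / h) / h))"
    by (simp add: conv_def Kh_def)
  also have "\<dots> = \<bar>h\<bar> *\<^sub>R (LINT z|lborel. g (x - (0 + h * z)) * (K ((0 + h * z) / h) / h))"
    using h by (intro lborel_integral_real_affine) simp
  also have "\<dots> = (LINT z|lborel. g (x - h * z) * K z)"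
    using h by simp
  finally show ?thesis .
qed

lemma integral_sign_split:
  "(LINT z|lborel. (if z > 0 then a else b) * K z) = (a + b) / 2"
proof -
  define P where "P = (LINT z|lborel. K z * indicator {0<..} z)"
  define N where "N = (LINT z|lborel. K z * indicator {..<0} z)"
  have iP: "integrable lborel (\<lambda>z. K z * indicator {0<..} z)"
    using K_integrable by (intro integrable_real_mult_indicator) auto
  have iN: "integrable lborel (\<lambda>z. K z * indicator {..<0} z)"
    using K_integrable by (intro integrable_real_mult_indicator) auto
  have "N = \<bar>-1\<bar> *\<^sub>R (LINT z|lborel. K (0 + (-1) * z) * indicator {..<0} (0 + (-1) * z))"
    unfolding N_def by (intro lborel_integral_real_affine) simp
  also have "\<dots> = P"
    unfolding P_def by (simp add: K_symmetric indicator_def)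
  finally have NP: "N = P" .
  have ae: "AE z in lborel. z \<noteq> 0" by (rule AE_lborel_singleton)
  have "1 = (LINT z|lborel. K z * indicator {0<..} z + K z * indicator {..<0} z)"
    unfolding K_integral[symmetric] using ae
    by (intro integral_cong_AE) (auto simp: indicator_def)
  also have "\<dots> = P + N" using iP iN unfolding P_def N_def by simp
  finally have P: "P = 1/2" using NP by simp
  have "(LINT z|lborel. (if z > 0 then a else b) * K z)
      = (LINT z|lborel. a * (K z * indicator {0<..} z) + b * (K z * indicator {..<0} z))"
    using ae by (intro integral_cong_AE) (auto simp: indicator_def)
  also have "\<dots> = a * P + b * N" using iP iN unfolding P_def N_def by simp
  finally show ?thesis using P NP by simp
qed

lemma tendsto_conv_Kh_one_sided:
  fixes g :: "nat \<Rightarrow> real \<Rightarrow> real" and h :: "nat \<Rightarrow> real"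
  assumes h: "\<And>n. h n > 0"
    and g_meas: "\<And>n. g n \<in> borel_measurable borel" and g_bound: "\<And>n y. \<bar>g n y\<bar> \<le> B"
    and pos: "\<And>z. z > 0 \<Longrightarrow> (\<lambda>n. g n (x - h n * z)) \<longlonglongrightarrow> a"
    and neg: "\<And>z. z < 0 \<Longrightarrow> (\<lambda>n. g n (x - h n * z)) \<longlonglongrightarrow> b"
  shows "(\<lambda>n. conv (g n) (Kh K (h n)) x) \<longlonglongrightarrow> (a + b) / 2"
proof -
  have "(\<lambda>n. LINT z|lborel. g n (x - h n * z) * K z)
          \<longlonglongrightarrow> (LINT z|lborel. (if z > 0 then a else b) * K z)"
  proof (rule integral_dominated_convergence[where w = "\<lambda>z. B * \<bar>K z\<bar>"])
    show "(\<lambda>z. (if z > 0 then a else b) * K z) \<in> borel_measurable lborel" by measurable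
    show "(\<lambda>z. g n (x - h n * z) * K z) \<in> borel_measurable lborel" for n
      using g_meas[of n] by measurable
    show "integrable lborel (\<lambda>z. B * \<bar>K z\<bar>)" using K_integrable by simp
    show "AE z in lborel. (\<lambda>n. g n (x - h n * z) * K z) \<longlonglongrightarrow> (if z > 0 then a else b) * K z"
      using AE_lborel_singleton[of 0]
      by eventually_elim (auto intro!: tendsto_mult pos neg simp: neq_iff)
    show "AE z in lborel. norm (g n (x - h n * z) * K z) \<le> B * \<bar>K z\<bar>" for n
      using g_bound by (auto simp: abs_mult intro!: mult_right_mono)
  qed
  then show ?thesis
    using integral_sign_split[of a b] conv_Kh_rescale[OF h] by simp
qed

lemma tendsto_conv_Kh:
  fixes g :: "nat \<Rightarrow> real \<Rightarrow> real" and h :: "nat \<Rightarrow> real"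
  assumes "\<And>n. h n > 0"
    and "\<And>n. g n \<in> borel_measurable borel" and "\<And>n y. \<bar>g n y\<bar> \<le> B"
    and lim: "\<And>z. z \<noteq> 0 \<Longrightarrow> (\<lambda>n. g n (x - h n * z)) \<longlonglongrightarrow> a"
  shows "(\<lambda>n. conv (g n) (Kh K (h n)) x) \<longlonglongrightarrow> a"
  using tendsto_conv_Kh_one_sided[OF assms(1-3), where x = x and a = a and b = a] lim by simp

end

section \<open>Fourier transforms of indicators of intervals\<close>

lemma cis_mult_measurable [measurable]: "(\<lambda>x. cis (u * x)) \<in> borel_measurable borel"
  by (intro borel_measurable_continuous_onI continuous_intros)

lemma norm_integral_cis_le_length:
  assumes "a \<le> b"
  shows "cmod (integral {a..b} (\<lambda>x. cis (u * x))) \<le> b - a"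
proof -
  have "(\<lambda>x. cis (u * x)) integrable_on {a..b}"
    by (intro integrable_continuous_real continuous_intros)
  then show ?thesis
    using has_integral_bound[of 1 "\<lambda>x. cis (u * x)" _ a b] assms by (simp add: integrable_integral)
qed

lemma norm_integral_cis_le_inverse_freq:
  assumes "a \<le> b" and u: "u \<noteq> 0"
  shows "cmod (integral {a..b} (\<lambda>x. cis (u * x))) \<le> 2 / \<bar>u\<bar>"
proof -
  define F where "F x = (- \<i> / complex_of_real u) * cis (u * x)" for x
  have "(F has_vector_derivative cis (u * x)) (at x within {a..b})" for x
  proof -
    have "((\<lambda>x. cis (u * x)) has_vector_derivative (u *\<^sub>R (\<i> * cis (u * x)))) (at x within {a..b})"
      unfolding has_vector_derivative_def
      by (rule has_derivative_eq_rhs, rule has_derivative_cis, rule derivative_eq_intros, auto)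
    then have "(F has_vector_derivative (- \<i> / complex_of_real u) * (u *\<^sub>R (\<i> * cis (u * x))))
        (at x within {a..b})"
      unfolding F_def by (intro has_vector_derivative_mult_right)
    moreover have "(- \<i> / complex_of_real u) * (u *\<^sub>R (\<i> * cis (u * x))) = cis (u * x)"
      using u by (simp add: scaleR_conv_of_real field_simps)
    ultimately show ?thesis by simp
  qed
  then have "((\<lambda>x. cis (u * x)) has_integral (F b - F a)) {a..b}"
    using assms by (intro fundamental_theorem_of_calculus) auto
  then have "integral {a..b} (\<lambda>x. cis (u * x)) = F b - F a" by (rule integral_unique)
  also have "F b - F a = (- \<i> / complex_of_real u) * (cis (u * b) - cis (u * a))"
    unfolding F_def by (simp add: algebra_simps)
  also have "cmod \<dots> = cmod (cis (u * b) - cis (u * a)) / \<bar>u\<bar>"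
    by (simp add: norm_mult norm_divide)
  also have "\<dots> \<le> 2 / \<bar>u\<bar>"
    using norm_triangle_ineq4[of "cis (u * b)" "cis (u * a)"] by (simp add: divide_right_mono)
  finally show ?thesis .
qed

text \<open>Up to a factor \<open>2\<close> this is \<open>min L (2 / \<bar>u\<bar>)\<close>, and unlike the minimum it has an explicit
  primitive.\<close>
definition interval_FT_bound :: "real \<Rightarrow> real \<Rightarrow> real" where
  "interval_FT_bound L u = 4 * L / (2 + L * \<bar>u\<bar>)"

lemma le_interval_FT_bound:
  assumes L: "0 < L" and l: "0 \<le> l" "l \<le> L" and u: "u \<noteq> 0 \<Longrightarrow> l \<le> 2 / \<bar>u\<bar>"
  shows "l \<le> interval_FT_bound L u"
proof -
  have d: "0 < 2 + L * \<bar>u\<bar>" using L by (simp add: add_pos_nonneg)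
  show ?thesis
  proof (cases "L * \<bar>u\<bar> \<le> 2")
    case True
    have "L * (2 + L * \<bar>u\<bar>) \<le> L * 4" using True L by (intro mult_left_mono) auto
    then have "L \<le> 4 * L / (2 + L * \<bar>u\<bar>)" using d by (simp add: pos_le_divide_eq mult.commute)
    then show ?thesis using l unfolding interval_FT_bound_def by simp
  next
    case False
    then have u0: "u \<noteq> 0" by auto
    have "2 / \<bar>u\<bar> = 4 * L / (2 * L * \<bar>u\<bar>)" using L u0 by simp
    also have "\<dots> \<le> 4 * L / (2 + L * \<bar>u\<bar>)" using False L d by (intro divide_left_mono) auto
    finally show ?thesis using u[OF u0] unfolding interval_FT_bound_def by simp
  qed
qed

lemma norm_FT_indicator_interval_le:
  assumes S: "S \<in> sets borel" "{a<..<b} \<subseteq> S" "S \<subseteq> {a..b}" and L: "0 < L" "b - a \<le> L"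
  shows "cmod (FT (indicator S) u) \<le> interval_FT_bound L u"
proof (cases "a \<le> b")
  case False
  then have "S = {}" using S by auto
  then show ?thesis using L by (simp add: FT_def interval_FT_bound_def)
next
  case True
  have [measurable]: "S \<in> sets borel" by fact
  have ae: "AE x in lborel. x \<noteq> a \<and> x \<noteq> b"
    using AE_lborel_singleton[of a] AE_lborel_singleton[of b] by eventually_elim auto
  have "FT (indicator S) u = (LINT x|lborel. indicator {a..b} x *\<^sub>R cis (u * x))"
    unfolding FT_def
  proof (intro integral_cong_AE)
    show "AE x in lborel.
        cis (u * x) * complex_of_real (indicator S x) = indicator {a..b} x *\<^sub>R cis (u * x)"
      using ae by eventually_elim (use S in \<open>auto simp: indicator_def\<close>)
  qed simp_all
  also have "\<dots> = integral {a..b} (\<lambda>x. cis (u * x))"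
  proof -
    have "set_integrable lborel {a..b} (\<lambda>x. cis (u * x))" unfolding set_integrable_def
      by (rule borel_integrable_compact) (auto intro!: continuous_intros)
    from set_borel_integral_eq_integral(2)[OF this] show ?thesis
      unfolding set_lebesgue_integral_def .
  qed
  finally show ?thesis
    using le_interval_FT_bound[OF L(1) norm_ge_zero order_trans[OF norm_integral_cis_le_length L(2)]]
      norm_integral_cis_le_inverse_freq True by simp
qed

lemma interval_FT_bound_has_integral:
  assumes L: "0 < L" and T: "0 \<le> T"
  shows "(interval_FT_bound L has_integral 8 * ln (1 + L * T / 2)) {-T..T}"
proof -
  have d1: "0 < 2 + L * u" if "0 \<le> u" for u using L that by (simp add: add_pos_nonneg)
  have d2: "0 < 2 - L * u" if "u \<le> 0" for u using d1[of "- u"] that by simp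
  have right: "(interval_FT_bound L has_integral (4 * ln (2 + L * T) - 4 * ln (2 + L * 0))) {0..T}"
  proof (rule fundamental_theorem_of_calculus[OF T])
    fix u assume u: "u \<in> {0..T}"
    have "((\<lambda>u. 4 * ln (2 + L * u)) has_real_derivative (4 * (L / (2 + L * u))))
        (at u within {0..T})"
      using d1[of u] u by (auto intro!: derivative_eq_intros)
    then show "((\<lambda>u. 4 * ln (2 + L * u)) has_vector_derivative interval_FT_bound L u)
        (at u within {0..T})"
      using u by (simp add: interval_FT_bound_def has_real_derivative_iff_has_vector_derivative)
  qed
  have left: "(interval_FT_bound L has_integral ((- 4 * ln (2 - L * 0)) - (- 4 * ln (2 - L * (-T)))))
      {-T..0}"
  proof (rule fundamental_theorem_of_calculus)
    show "-T \<le> 0" using T by simp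
    fix u assume u: "u \<in> {-T..0}"
    have "((\<lambda>u. - 4 * ln (2 - L * u)) has_real_derivative (- 4 * ((- L) / (2 - L * u))))
        (at u within {-T..0})"
      using d2[of u] u by (auto intro!: derivative_eq_intros)
    then show "((\<lambda>u. - 4 * ln (2 - L * u)) has_vector_derivative interval_FT_bound L u)
        (at u within {-T..0})"
      using u by (simp add: interval_FT_bound_def has_real_derivative_iff_has_vector_derivative)
  qed
  have "(interval_FT_bound L has_integral 8 * (ln (2 + L * T) - ln 2)) {-T..T}"
    using has_integral_combine[OF _ _ left right] T by (simp add: algebra_simps)
  moreover have "ln (2 + L * T) - ln 2 = ln (1 + L * T / 2)"
    using ln_divide_pos[of "2 + L * T" 2] d1[OF T] by (simp add: add_divide_distrib)
  ultimately show ?thesis by simp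
qed

lemma FI_le_of_FT_bound:
  assumes h: "h > 0" and L: "L > 0" and M: "M \<ge> 0" and C: "C \<ge> 0"
    and bound: "\<And>u. u \<in> {-(1/h)..1/h} \<Longrightarrow> cmod (FT g u) \<le> M * interval_FT_bound L u + C"
  shows "FI g h \<le> 8 * M * ln (1 + L / (2 * h)) + 2 * C / h"
proof -
  define T where "T = 1 / h"
  have T: "T \<ge> 0" using h by (simp add: T_def)
  have "2 + L * \<bar>u\<bar> \<noteq> 0" for u
    using L by (smt (verit) mult_nonneg_nonneg abs_ge_zero)
  then have "continuous_on {-T..T} (\<lambda>u. M * interval_FT_bound L u + C)"
    unfolding interval_FT_bound_def by (intro continuous_intros) auto
  then have si: "set_integrable lborel {-T..T} (\<lambda>u. M * interval_FT_bound L u + C)"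
    unfolding set_integrable_def by (rule borel_integrable_compact[rotated]) auto
  have "((\<lambda>u. M * interval_FT_bound L u + C) has_integral
      (M * (8 * ln (1 + L * T / 2)) + C * (T - (-T)))) {-T..T}"
    by (intro has_integral_add has_integral_mult_right interval_FT_bound_has_integral L T)
       (use has_integral_const_real[of C "-T" T] T in \<open>simp add: mult_ac\<close>)
  then have val: "(LINT u:{-T..T}|lborel. M * interval_FT_bound L u + C)
      = 8 * M * ln (1 + L / (2 * h)) + 2 * C / h"
    using set_borel_integral_eq_integral(2)[OF si] by (simp add: integral_unique T_def mult_ac)
  show ?thesis
  proof (cases "set_integrable lborel {-T..T} (\<lambda>u. cmod (FT g u))")
    case True
    have "FI g h \<le> (LINT u:{-T..T}|lborel. M * interval_FT_bound L u + C)"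
      unfolding FI_def T_def[symmetric]
      by (rule set_integral_mono[OF True si]) (use bound in \<open>auto simp: T_def\<close>)
    then show ?thesis using val by simp
  next
    case False
    \<comment> \<open>then \<open>FI g h\<close> is the junk value \<open>0\<close> of a non-integrable Lebesgue integral\<close>
    then have "FI g h = 0"
      unfolding FI_def T_def[symmetric]
      by (simp add: set_lebesgue_integral_def set_integrable_def not_integrable_integral_eq)
    then show ?thesis using h L M C by simp
  qed
qed

section \<open>Measurable functions dominated by a box\<close>

definition box_dominated :: "(real \<Rightarrow> real) \<Rightarrow> bool" where
  "box_dominated g \<longleftrightarrow> g \<in> borel_measurable borel \<and>
     (\<exists>B R. 0 \<le> B \<and> 0 \<le> R \<and> (\<forall>x. \<bar>g x\<bar> \<le> B * indicator {-R..R} x))"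

lemma box_dominated_measurable: "box_dominated g \<Longrightarrow> g \<in> borel_measurable borel"
  by (simp add: box_dominated_def)

lemma box_dominatedI:
  assumes "g \<in> borel_measurable borel" "0 \<le> B" "0 \<le> R" "\<And>x. \<bar>g x\<bar> \<le> B * indicator {-R..R} x"
  shows "box_dominated g"
  using assms unfolding box_dominated_def by blast

lemma integrable_box: "integrable lborel (\<lambda>x::real. B * indicator {-R..R} x :: real)"
  using borel_integrable_compact[of "{-R..R}" "\<lambda>x. B"] by (simp add: mult.commute)

lemma box_dominated_integrable:
  assumes "box_dominated g" shows "integrable lborel g"
proof -
  obtain B R where "g \<in> borel_measurable borel" and bound: "\<And>x. \<bar>g x\<bar> \<le> B * indicator {-R..R} x"
    using assms unfolding box_dominated_def by blast
  moreover have "\<bar>g x\<bar> \<le> \<bar>B * indicator {-R..R} x\<bar>" for x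
    using bound[of x] by linarith
  ultimately show ?thesis
    by (intro Bochner_Integration.integrable_bound[OF integrable_box[of B R]]) auto
qed

lemma box_dominated_integrable_cis:
  assumes "box_dominated g" shows "integrable lborel (\<lambda>x. cis (u * x) * complex_of_real (g x))"
  by (rule Bochner_Integration.integrable_bound[OF box_dominated_integrable])
     (use assms in \<open>auto simp: norm_mult box_dominated_def\<close>)

lemma box_dominated_abs_le:
  assumes "box_dominated g"
  obtains B R where "\<And>x. \<bar>g x\<bar> \<le> B" "\<And>x. \<bar>g x\<bar> \<le> B * indicator {-R..R} x"
proof -
  obtain B R where B: "0 \<le> B" and bound: "\<And>x. \<bar>g x\<bar> \<le> B * indicator {-R..R} x"
    using assms unfolding box_dominated_def by blast
  have "B * indicator {-R..R} x \<le> B" for x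
    using B by (simp add: indicator_def)
  then show ?thesis using that[of B R] bound order_trans by blast
qed

lemma box_dominated_bounded: "box_dominated g \<Longrightarrow> bounded (range g)"
  by (elim box_dominated_abs_le) (auto simp: bounded_iff)

lemma box_dominated_square_integrable:
  assumes "box_dominated g" shows "integrable lborel (\<lambda>x. (g x)\<^sup>2)"
proof -
  obtain B R where [measurable]: "g \<in> borel_measurable borel"
    and B: "\<And>x. \<bar>g x\<bar> \<le> B" and bound: "\<And>x. \<bar>g x\<bar> \<le> B * indicator {-R..R} x"
    using box_dominated_abs_le assms unfolding box_dominated_def by metis
  have "0 \<le> B" using B[of 0] by linarith
  then have "norm ((g x)\<^sup>2) \<le> norm ((B * B) * indicator {-R..R} x)" for x
    using mult_mono[OF B bound, of x x] by (simp add: power2_eq_square abs_mult mult.assoc)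
  then show ?thesis
    by (intro Bochner_Integration.integrable_bound[OF integrable_box[of "B * B" R]]) auto
qed

lemma box_dominated_add:
  assumes "box_dominated f" "box_dominated g" shows "box_dominated (\<lambda>x. f x + g x)"
proof -
  obtain B1 R1 where [measurable]: "f \<in> borel_measurable borel" and B1: "0 \<le> B1" "0 \<le> R1"
    and f: "\<And>x. \<bar>f x\<bar> \<le> B1 * indicator {-R1..R1} x"
    using assms(1) unfolding box_dominated_def by blast
  obtain B2 R2 where [measurable]: "g \<in> borel_measurable borel" and B2: "0 \<le> B2" "0 \<le> R2"
    and g: "\<And>x. \<bar>g x\<bar> \<le> B2 * indicator {-R2..R2} x"
    using assms(2) unfolding box_dominated_def by blast
  have "\<bar>f x + g x\<bar> \<le> B1 * indicator {-R1..R1} x + B2 * indicator {-R2..R2} x" for x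
    using f[of x] g[of x] by linarith
  also have "\<dots> x \<le> (B1 + B2) * indicator {-max R1 R2..max R1 R2} x" for x
    using B1 B2 by (auto simp: indicator_def)
  finally have "\<bar>f x + g x\<bar> \<le> (B1 + B2) * indicator {-max R1 R2..max R1 R2} x" for x .
  then show ?thesis using B1 B2 by (intro box_dominatedI[of _ "B1 + B2" "max R1 R2"]) auto
qed

lemma box_dominated_cmult:
  assumes "box_dominated g" shows "box_dominated (\<lambda>x. c * g x)"
proof -
  obtain B R where [measurable]: "g \<in> borel_measurable borel" and B: "0 \<le> B" "0 \<le> R"
    and g: "\<And>x. \<bar>g x\<bar> \<le> B * indicator {-R..R} x"
    using assms unfolding box_dominated_def by blast
  have "\<bar>c * g x\<bar> \<le> (\<bar>c\<bar> * B) * indicator {-R..R} x" for x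
    using mult_left_mono[OF g[of x], of "\<bar>c\<bar>"] by (simp add: abs_mult mult.assoc)
  then show ?thesis using B by (intro box_dominatedI[of _ "\<bar>c\<bar> * B" R]) auto
qed

lemma box_dominated_sum:
  "finite I \<Longrightarrow> (\<And>i. i \<in> I \<Longrightarrow> box_dominated (f i)) \<Longrightarrow> box_dominated (\<lambda>x. \<Sum>i\<in>I. f i x)"
proof (induction I rule: finite_induct)
  case empty
  show ?case by (intro box_dominatedI[of _ 0 0]) auto
next
  case (insert a I)
  then show ?case by (simp add: box_dominated_add)
qed

lemma box_dominated_indicator:
  assumes "S \<in> sets borel" "S \<subseteq> {a..b}"
  shows "box_dominated (indicator S)"
proof (rule box_dominatedI[of _ 1 "max \<bar>a\<bar> \<bar>b\<bar>"])
  show "\<bar>indicator S x :: real\<bar> \<le> 1 * indicator {-max \<bar>a\<bar> \<bar>b\<bar>..max \<bar>a\<bar> \<bar>b\<bar>} x" for x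
    using assms(2) by (auto simp: indicator_def subset_iff abs_le_iff)
qed (use assms(1) in auto)

lemma box_dominated_indicator_atLeastAtMost: "box_dominated (indicator {a..b})"
  by (rule box_dominated_indicator) auto

lemma FT_add: "box_dominated f \<Longrightarrow> box_dominated g \<Longrightarrow> FT (\<lambda>x. f x + g x) u = FT f u + FT g u"
  unfolding FT_def by (simp add: distrib_left box_dominated_integrable_cis)

lemma FT_cmult: "FT (\<lambda>x. c * g x) u = complex_of_real c * FT g u"
  unfolding FT_def by (simp add: mult.left_commute)

lemma FT_sum:
  "finite I \<Longrightarrow> (\<And>i. i \<in> I \<Longrightarrow> box_dominated (f i)) \<Longrightarrow> FT (\<lambda>x. \<Sum>i\<in>I. f i x) u = (\<Sum>i\<in>I. FT (f i) u)"
proof (induction I rule: finite_induct)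
  case empty
  then show ?case by (simp add: FT_def)
next
  case (insert a I)
  then show ?case by (simp add: FT_add box_dominated_sum)
qed

lemma norm_FT_le_box:
  assumes [measurable]: "g \<in> borel_measurable borel"
    and bound: "\<And>x. \<bar>g x\<bar> \<le> B * indicator {-R..R} x" and R: "R \<ge> 0"
  shows "cmod (FT g u) \<le> 2 * B * R"
proof -
  have "0 \<le> B" using bound[of 0] R by simp
  then have "box_dominated g" using R bound by (intro box_dominatedI[of g B R]) auto
  have "cmod (FT g u) \<le> (LINT x|lborel. norm (cis (u * x) * complex_of_real (g x)))"
    unfolding FT_def by (rule integral_norm_bound)
  also have "\<dots> = (LINT x|lborel. \<bar>g x\<bar>)" by (simp add: norm_mult)
  also have "\<dots> \<le> (LINT x|lborel. B * indicator {-R..R} x)"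
    using \<open>box_dominated g\<close>
    by (intro integral_mono integrable_box bound Bochner_Integration.integrable_abs
        box_dominated_integrable)
  also have "\<dots> = 2 * B * R" using R by simp
  finally show ?thesis .
qed

lemma f_lambda_eq:
  "eps > 0 \<Longrightarrow> f_lambda eps H = (\<lambda>x. indicator {-H..-eps} x + indicator {eps..H} x)"
  by (auto simp: f_lambda_def indicator_def fun_eq_iff abs_if)

lemma f_q_eq: "f_q j eps = indicator {of_int j - eps<..<of_int j + eps}"
  by (auto simp: f_q_def indicator_def fun_eq_iff abs_if)

lemma f_N_eq:
  "eps > 0 \<Longrightarrow> f_N eps H t =
     (\<lambda>x. indicator {-H..min (-eps) (thr eps t)} x + indicator {eps..min H (thr eps t)} x)"
  by (auto simp: f_N_def g_N_def indicator_def fun_eq_iff abs_if)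

lemma abs_f_lambda_le: "\<bar>f_lambda eps H x\<bar> \<le> 1"
  by (simp add: f_lambda_def)

lemma abs_f_q_le: "\<bar>f_q j eps x\<bar> \<le> 1"
  by (simp add: f_q_def)

lemma abs_f_N_le: "\<bar>f_N eps H t x\<bar> \<le> 1"
  by (simp add: f_N_def g_N_def)

lemma abs_f_gamma_le_box:
  assumes "c \<noteq> 0" "h > 0" shows "\<bar>f_gamma c h x\<bar> \<le> (h / \<bar>c\<bar>) * indicator {-h..h} x"
  using assms by (auto simp: f_gamma_def abs_divide indicator_def intro!: divide_right_mono)

lemma abs_f_gamma_le: "c \<noteq> 0 \<Longrightarrow> h > 0 \<Longrightarrow> \<bar>f_gamma c h x\<bar> \<le> h / \<bar>c\<bar>"
  by (auto simp: f_gamma_def abs_divide intro!: divide_right_mono)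

lemma f_gamma_measurable [measurable]: "f_gamma c h \<in> borel_measurable borel"
  unfolding f_gamma_def by measurable

lemma box_dominated_f_lambda: "eps > 0 \<Longrightarrow> box_dominated (f_lambda eps H)"
  by (simp add: f_lambda_eq box_dominated_add box_dominated_indicator_atLeastAtMost)

lemma box_dominated_f_gamma: "c \<noteq> 0 \<Longrightarrow> h > 0 \<Longrightarrow> box_dominated (f_gamma c h)"
  by (intro box_dominatedI[of _ "h / \<bar>c\<bar>" h] abs_f_gamma_le_box) auto

lemma box_dominated_f_q: "box_dominated (f_q j eps)"
  unfolding f_q_eq by (rule box_dominated_indicator[of _ "of_int j - eps" "of_int j + eps"]) auto

lemma box_dominated_f_N: "eps > 0 \<Longrightarrow> box_dominated (f_N eps H t)"
  by (simp add: f_N_eq box_dominated_add box_dominated_indicator_atLeastAtMost)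

text \<open>All the intervals involved have length at most \<open>\<bar>H\<bar> + 1\<close>.\<close>

lemma norm_FT_f_lambda_le:
  assumes "eps > 0" shows "cmod (FT (f_lambda eps H) u) \<le> 2 * interval_FT_bound (\<bar>H\<bar> + 1) u"
proof -
  have "cmod (FT (indicator {-H..-eps}) u) \<le> interval_FT_bound (\<bar>H\<bar> + 1) u"
    "cmod (FT (indicator {eps..H}) u) \<le> interval_FT_bound (\<bar>H\<bar> + 1) u"
    using assms by (auto intro!: norm_FT_indicator_interval_le)
  then show ?thesis
    using assms norm_triangle_ineq[of "FT (indicator {-H..-eps}) u" "FT (indicator {eps..H}) u"]
    by (simp add: f_lambda_eq FT_add box_dominated_indicator_atLeastAtMost)
qed

lemma norm_FT_f_q_le:
  assumes "eps < 1/2" shows "cmod (FT (f_q j eps) u) \<le> interval_FT_bound (\<bar>H\<bar> + 1) u"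
  unfolding f_q_eq using assms
  by (intro norm_FT_indicator_interval_le[of _ "of_int j - eps" "of_int j + eps"]) auto

lemma norm_FT_f_N_le:
  assumes "eps > 0" shows "cmod (FT (f_N eps H t) u) \<le> 2 * interval_FT_bound (\<bar>H\<bar> + 1) u"
proof -
  define m1 where "m1 = min (-eps) (thr eps t)"
  define m2 where "m2 = min H (thr eps t)"
  have "cmod (FT (indicator {-H..m1}) u) \<le> interval_FT_bound (\<bar>H\<bar> + 1) u"
    "cmod (FT (indicator {eps..m2}) u) \<le> interval_FT_bound (\<bar>H\<bar> + 1) u"
    using assms by (auto intro!: norm_FT_indicator_interval_le simp: m1_def m2_def)
  then show ?thesis
    using assms norm_triangle_ineq[of "FT (indicator {-H..m1}) u" "FT (indicator {eps..m2}) u"]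
    by (simp add: f_N_eq FT_add box_dominated_indicator_atLeastAtMost flip: m1_def m2_def)
qed

lemma norm_FT_f_gamma_le: "c \<noteq> 0 \<Longrightarrow> h > 0 \<Longrightarrow> cmod (FT (f_gamma c h) u) \<le> 2 / \<bar>c\<bar> * h\<^sup>2"
  using norm_FT_le_box[OF f_gamma_measurable abs_f_gamma_le_box, of c h u]
  by (simp add: power2_eq_square)

section \<open>Growth of \<open>ln (1 / h n)\<close> against powers of \<open>n\<close>\<close>

lemma eventually_powr_le_sqrt:
  assumes s: "s < 1/2" and e: "e > 0"
  shows "eventually (\<lambda>n. real n powr s \<le> e * sqrt (real n)) sequentially"
proof -
  have "((\<lambda>n. real n powr (s - 1/2)) \<longlongrightarrow> 0) sequentially"
    using s by (intro tendsto_neg_powr filterlim_real_sequentially) auto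
  then have "eventually (\<lambda>n. real n powr (s - 1/2) < e) sequentially"
    using e by (rule order_tendstoD)
  then show ?thesis using eventually_ge_at_top[of 1]
  proof eventually_elim
    case (elim n)
    have "real n powr s = real n powr (s - 1/2) * real n powr (1/2)"
      by (simp add: powr_add[symmetric])
    also have "\<dots> \<le> e * real n powr (1/2)"
      using elim by (intro mult_right_mono) auto
    finally show ?case using elim by (simp add: powr_half_sqrt)
  qed
qed

lemma eventually_powr_ge:
  assumes p: "p > 0"
  shows "eventually (\<lambda>n. real n powr p \<ge> K) sequentially"
proof -
  have "((\<lambda>n. real n powr (- p)) \<longlongrightarrow> 0) sequentially"
    using p by (intro tendsto_neg_powr filterlim_real_sequentially) auto
  then have "eventually (\<lambda>n. real n powr (- p) < 1 / (\<bar>K\<bar> + 1)) sequentially"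
    by (rule order_tendstoD) (simp add: add_nonneg_pos)
  then show ?thesis using eventually_ge_at_top[of 1]
  proof eventually_elim
    case (elim n)
    then have "\<bar>K\<bar> + 1 < 1 / real n powr (- p)"
      by (simp add: field_simps)
    then show ?case using elim by (simp add: powr_minus divide_inverse)
  qed
qed

lemma eventually_ln_inverse_le_powr:
  fixes h :: "nat \<Rightarrow> real"
  assumes h_rate: "h \<in> \<Theta>(\<lambda>n. exp (- (real n powr \<theta>)))" and "\<theta> \<le> p" "p > 0"
    and h_pos: "\<And>n. h n > 0"
  shows "eventually (\<lambda>n. ln (1 / h n) \<le> 2 * real n powr p) sequentially"
proof -
  obtain c where c: "c > 0"
    and lower: "eventually (\<lambda>n. norm (h n) \<ge> c * norm (exp (- (real n powr \<theta>)))) sequentially"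
    using bigthetaD2[OF h_rate] by (elim landau_omega.bigE) auto
  show ?thesis using lower eventually_powr_ge[OF \<open>p > 0\<close>, of "- ln c"] eventually_ge_at_top[of 1]
  proof eventually_elim
    case (elim n)
    have "c * exp (- (real n powr \<theta>)) \<le> h n" using elim h_pos[of n] by simp
    then have "ln (c * exp (- (real n powr \<theta>))) \<le> ln (h n)"
      using c by (intro ln_mono) auto
    then have "ln c - real n powr \<theta> \<le> ln (h n)" using c by (simp add: ln_mult)
    moreover have "real n powr \<theta> \<le> real n powr p" using elim \<open>\<theta> \<le> p\<close> by (intro powr_mono) auto
    ultimately show ?case using elim h_pos[of n] by (simp add: ln_div)
  qed
qed

lemma tendsto_log_over_powr_zero:
  fixes L :: "nat \<Rightarrow> real"
  assumes p: "p > 0" and \<rho>: "\<rho> > 0" "p * \<rho> < 1"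
    and upper: "eventually (\<lambda>n. L n \<le> 2 * real n powr p) sequentially"
    and nonneg: "eventually (\<lambda>n. L n \<ge> 0) sequentially"
  shows "(\<lambda>n. L n / real n powr (1 / \<rho>)) \<longlonglongrightarrow> 0"
proof (rule tendsto_sandwich[where f = "\<lambda>_. 0" and h = "\<lambda>n. 2 * real n powr (p - 1 / \<rho>)"])
  show "eventually (\<lambda>n. 0 \<le> L n / real n powr (1 / \<rho>)) sequentially"
    using nonneg by eventually_elim simp
  show "eventually (\<lambda>n. L n / real n powr (1 / \<rho>) \<le> 2 * real n powr (p - 1 / \<rho>)) sequentially"
    using upper eventually_ge_at_top[of 1]
  proof eventually_elim
    case (elim n)
    then have "L n / real n powr (1 / \<rho>) \<le> 2 * real n powr p / real n powr (1 / \<rho>)"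
      by (intro divide_right_mono) auto
    also have "\<dots> = 2 * real n powr (p - 1 / \<rho>)" using elim by (simp add: powr_diff)
    finally show ?case .
  qed
  have "p - 1 / \<rho> < 0" using \<rho> p by (simp add: field_simps)
  then have "(\<lambda>n. real n powr (p - 1 / \<rho>)) \<longlonglongrightarrow> 0"
    by (intro tendsto_neg_powr filterlim_real_sequentially) auto
  then show "(\<lambda>n. 2 * real n powr (p - 1 / \<rho>)) \<longlonglongrightarrow> 0"
    using tendsto_mult_left[of _ 0 _ 2] by simp
qed (simp)

lemma eventually_powr_log_le_sqrt:
  fixes L :: "nat \<Rightarrow> real"
  assumes p: "p > 0" and q: "q \<ge> 0" and \<rho>: "\<rho> > 0" and exps: "p * (1 + \<rho>) + q < 1/2"
    and upper: "eventually (\<lambda>n. L n \<le> 2 * real n powr p) sequentially"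
    and ge1: "eventually (\<lambda>n. L n \<ge> 1) sequentially"
    and A: "A \<ge> 0" and e: "e > 0"
  shows "eventually (\<lambda>n. A * real n powr q * (L n + 1) * L n powr \<rho> \<le> e * sqrt (real n))
    sequentially"
proof -
  define A' where "A' = 2 * A * 2 powr (1 + \<rho>) + 1"
  have A': "A' > 0" unfolding A'_def using A by (simp add: add_nonneg_pos)
  have "eventually (\<lambda>n. real n powr (q + p * (1 + \<rho>)) \<le> e / A' * sqrt (real n)) sequentially"
    using exps e A' by (intro eventually_powr_le_sqrt) auto
  with upper ge1 show ?thesis
  proof eventually_elim
    case (elim n)
    have "A * real n powr q * (L n + 1) * L n powr \<rho> \<le> A * real n powr q * (2 * L n) * L n powr \<rho>"
      using elim A by (intro mult_right_mono mult_left_mono) auto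
    also have "\<dots> = 2 * A * real n powr q * L n powr (1 + \<rho>)"
      using elim by (simp add: powr_add)
    also have "\<dots> \<le> 2 * A * real n powr q * (2 * real n powr p) powr (1 + \<rho>)"
      using elim A \<rho> by (intro mult_left_mono powr_mono2) auto
    also have "(2 * real n powr p) powr (1 + \<rho>) = 2 powr (1 + \<rho>) * real n powr (p * (1 + \<rho>))"
      by (simp add: powr_mult powr_powr)
    also have "2 * A * real n powr q * (2 powr (1 + \<rho>) * real n powr (p * (1 + \<rho>)))
        = (2 * A * 2 powr (1 + \<rho>)) * real n powr (q + p * (1 + \<rho>))"
      by (simp add: powr_add mult_ac)
    also have "\<dots> \<le> A' * real n powr (q + p * (1 + \<rho>))"
      unfolding A'_def by (intro mult_right_mono) auto
    also have "\<dots> \<le> e * sqrt (real n)"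
      using elim A' by (simp add: field_simps)
    finally show ?case .
  qed
qed

lemma rate_exponent_exists:
  fixes h :: "nat \<Rightarrow> real"
  assumes h_rate: "h \<in> \<Theta>(\<lambda>n. exp (- (real n powr \<theta>)))" and h_pos: "\<And>n. h n > 0"
    and q: "0 \<le> q" "q < 1/2" "2 * \<theta> + q < 1/2"
  obtains \<delta> p where "\<delta> > 0" "p > 0" "p * (2 + 2 * \<delta>) + q < 1/2"
    "eventually (\<lambda>n. ln (1 / h n) \<le> 2 * real n powr p) sequentially"
proof -
  define p where "p = max \<theta> ((1/2 - q) / 8)"
  have p: "p > 0" "\<theta> \<le> p" "2 * p + q < 1/2" using q by (auto simp: p_def max_def field_simps)
  define \<delta> where "\<delta> = ((1/2 - q) / (2 * p) - 1) / 2"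
  have "(1/2 - q) / (2 * p) > 1" using p by (simp add: field_simps)
  then have "\<delta> > 0" by (simp add: \<delta>_def)
  have "p * (2 + 2 * \<delta>) = p + (1/2 - q) / 2" using p by (simp add: \<delta>_def field_simps)
  then have "p * (2 + 2 * \<delta>) + q < 1/2" using p(3) by argo
  with p \<open>\<delta> > 0\<close> eventually_ln_inverse_le_powr[OF h_rate p(2,1) h_pos] show ?thesis
    by (intro that) auto
qed

lemma ln_interval_length_le:
  fixes h L :: real
  assumes h: "0 < h" "h < 1/2" and L: "0 < L" "h * L < 1/2"
  shows "ln (1 + L / (2 * h)) \<le> 2 * ln (1 / h)"
proof -
  have "h * h \<le> 1/4" using h mult_strict_mono[OF h(2) h(2)] by simp
  then have "h * h + h * L / 2 \<le> 1" using L by linarith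
  moreover have "1 + L / (2 * h) = (h * h + h * L / 2) / h\<^sup>2"
    using h by (simp add: field_simps power2_eq_square)
  ultimately have "1 + L / (2 * h) \<le> 1 / h\<^sup>2"
    using h by (simp add: divide_right_mono)
  then have "ln (1 + L / (2 * h)) \<le> ln (1 / h\<^sup>2)"
    using h L by (intro ln_mono) (auto intro: add_pos_nonneg)
  also have "\<dots> = 2 * ln (1 / h)" using h by (simp add: ln_div ln_realpow)
  finally show ?thesis .
qed

lemma FI_le_powr_log:
  assumes h: "0 < h" "h < 1/2" and L: "0 < L" "h * L < 1/2" and N: "1 \<le> N" and q: "0 \<le> q"
    and M: "0 \<le> M" "M \<le> A\<^sub>M * N powr q" and C: "0 \<le> C" "C \<le> A\<^sub>C * h\<^sup>2"
    and bound: "\<And>u. u \<in> {-(1/h)..1/h} \<Longrightarrow> cmod (FT g u) \<le> M * interval_FT_bound L u + C"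
  shows "FI g h \<le> (16 * A\<^sub>M + 2 * A\<^sub>C) * N powr q * (ln (1 / h) + 1)"
proof -
  define \<Lambda> where "\<Lambda> = ln (1 / h)"
  have \<Lambda>: "0 \<le> \<Lambda>" using h by (simp add: \<Lambda>_def)
  have Nq: "1 \<le> N powr q" using N q by (simp add: ge_one_powr_ge_zero)
  have A\<^sub>M: "0 \<le> A\<^sub>M * N powr q" using M by linarith
  have "0 \<le> A\<^sub>C * h\<^sup>2" using C by linarith
  then have A\<^sub>C: "0 \<le> A\<^sub>C" using h by (simp add: zero_le_mult_iff)
  have FI: "FI g h \<le> 8 * M * ln (1 + L / (2 * h)) + 2 * C / h"
    by (rule FI_le_of_FT_bound[OF h(1) L(1) M(1) C(1) bound])
  have "M * ln (1 + L / (2 * h)) \<le> (A\<^sub>M * N powr q) * (2 * \<Lambda>)"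
    unfolding \<Lambda>_def using ln_interval_length_le[OF h L] M h L
    by (intro mult_mono) auto
  also have "\<dots> \<le> (A\<^sub>M * N powr q) * (2 * (\<Lambda> + 1))"
    using A\<^sub>M by (intro mult_left_mono) auto
  also have "\<dots> = 2 * (A\<^sub>M * N powr q * (\<Lambda> + 1))"
    by (simp add: mult_ac)
  finally have M_part: "M * ln (1 + L / (2 * h)) \<le> 2 * (A\<^sub>M * N powr q * (\<Lambda> + 1))" .
  have "2 * C / h \<le> 2 * A\<^sub>C * h"
    using C h by (simp add: field_simps power2_eq_square)
  also have "h \<le> N powr q * (\<Lambda> + 1)"
    using mult_mono[OF Nq, of 1 "\<Lambda> + 1"] \<Lambda> h by simp
  then have "2 * A\<^sub>C * h \<le> 2 * (A\<^sub>C * (N powr q * (\<Lambda> + 1)))"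
    using A\<^sub>C by (simp add: mult_left_mono)
  finally have C_part: "2 * C / h \<le> 2 * (A\<^sub>C * N powr q * (\<Lambda> + 1))"
    by (simp add: mult_ac)
  show ?thesis
    using FI M_part C_part unfolding \<Lambda>_def[symmetric] by (simp add: algebra_simps)
qed

lemma propsI:
  assumes "\<And>i n. i \<in> I \<Longrightarrow> box_dominated (G i n)"
    and "\<forall>e>0. eventually (\<lambda>n. \<forall>i\<in>I. FI (G i n) (h n) \<le> e * rate h \<delta> n) sequentially"
    and "\<And>i. i \<in> I \<Longrightarrow> \<exists>B. \<forall>n x. \<bar>G i n x\<bar> \<le> B"
    and "\<And>i x. i \<in> I \<Longrightarrow> convergent (\<lambda>n. conv (G i n) (Kh K (h n)) x)"
  shows "props K h \<delta> G I"
  using assms box_dominated_bounded box_dominated_square_integrable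
  unfolding props_def box_dominated_def by blast

locale bandwidths = symmetric_kernel +
  fixes h eps H :: "nat \<Rightarrow> real"
  assumes h_pos: "\<And>n. h n > 0" and eps_pos: "\<And>n. eps n > 0" and eps_less_half: "\<And>n. eps n < 1/2"
    and h_lim: "h \<longlonglongrightarrow> 0" and eps_lim: "eps \<longlonglongrightarrow> 0" and H_lim: "filterlim H at_top sequentially"
    and h_over_eps: "(\<lambda>n. h n / eps n) \<longlonglongrightarrow> 0" and h_times_H: "(\<lambda>n. h n * H n) \<longlonglongrightarrow> 0"
begin

lemma h_bounded: "\<exists>h\<^sub>0. \<forall>n. h n \<le> h\<^sub>0"
proof -
  have "Bseq h" using h_lim by (intro convergent_imp_Bseq) (auto simp: convergent_def)
  then show ?thesis by (metis BseqE real_norm_def abs_le_D1)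
qed

lemma eventually_ln_inverse_h_ge_1: "eventually (\<lambda>n. ln (1 / h n) \<ge> 1) sequentially"
  using order_tendstoD(2)[OF h_lim exp_gt_zero[of "-1"]]
proof eventually_elim
  case (elim n)
  then have "ln (h n) < -1" using h_pos[of n] by (metis ln_exp ln_less_cancel_iff exp_gt_zero)
  then show ?case using h_pos[of n] by (simp add: ln_div)
qed

lemma eventually_h_less_half: "eventually (\<lambda>n. h n < 1/2) sequentially"
  using order_tendstoD(2)[OF h_lim, of "1/2"] by simp

lemma eventually_abs_h_mult_less: "a > 0 \<Longrightarrow> eventually (\<lambda>n. \<bar>h n * z\<bar> < a) sequentially"
  using tendsto_rabs[OF tendsto_mult_left_zero[OF h_lim, of z]] by (auto dest: order_tendstoD)

lemma eventually_abs_h_mult_less_eps: "eventually (\<lambda>n. \<bar>h n * z\<bar> < eps n) sequentially"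
proof -
  have "(\<lambda>n. \<bar>z\<bar> * (h n / eps n)) \<longlonglongrightarrow> 0"
    using tendsto_mult_right_zero[OF h_over_eps] by simp
  then have "eventually (\<lambda>n. \<bar>z\<bar> * (h n / eps n) < 1) sequentially"
    by (rule order_tendstoD(2)) simp
  then show ?thesis
  proof eventually_elim
    case (elim n)
    then show ?case using eps_pos[of n] h_pos[of n] by (simp add: abs_mult field_simps)
  qed
qed

lemma eventually_eps_less: "a > 0 \<Longrightarrow> eventually (\<lambda>n. eps n < a) sequentially"
  using eps_lim by (auto dest: order_tendstoD)

lemma eventually_H_greater: "eventually (\<lambda>n. H n > a) sequentially"
  using H_lim by (simp add: filterlim_at_top_dense)

lemma eventually_h_mult_H_less_half: "eventually (\<lambda>n. h n * (\<bar>H n\<bar> + 1) < 1/2) sequentially"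
proof -
  have "(\<lambda>n. h n * H n + h n) \<longlonglongrightarrow> 0"
    using tendsto_add[OF h_times_H h_lim] by simp
  then have "eventually (\<lambda>n. h n * H n + h n < 1/2) sequentially"
    by (rule order_tendstoD(2)) simp
  with eventually_H_greater[of 0] show ?thesis
    by eventually_elim (simp add: algebra_simps)
qed

end

section \<open>Pointwise limits of the smoothed test functions\<close>

lemma thr_eq_self:
  assumes "\<And>j::int. \<bar>t - of_int j\<bar> > eps"
  shows "thr eps t = t"
proof -
  have "\<not> (\<exists>j::int. of_int j - eps \<le> t \<and> t < of_int j)"
    "\<not> (\<exists>j::int. of_int j \<le> t \<and> t \<le> of_int j + eps)"
    using assms by (smt (verit))+
  then show ?thesis unfolding thr_def by (simp only: if_False)
qed

lemma thr_of_int: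
  assumes eps: "0 < eps" "eps < 1/2"
  shows "thr eps (of_int k) = of_int k + eps"
proof -
  have below: "\<not> (\<exists>j::int. of_int j - eps \<le> of_int k \<and> (of_int k :: real) < of_int j)"
  proof
    assume "\<exists>j::int. of_int j - eps \<le> of_int k \<and> (of_int k :: real) < of_int j"
    then obtain j :: int where "of_int j - eps \<le> of_int k" "k < j" by auto
    moreover from \<open>k < j\<close> have "real_of_int k + 1 \<le> of_int j" by linarith
    ultimately show False using eps by linarith
  qed
  have ex: "\<exists>j::int. of_int j \<le> real_of_int k \<and> real_of_int k \<le> of_int j + eps"
    using eps by auto
  define j where "j = (SOME j::int. of_int j \<le> real_of_int k \<and> real_of_int k \<le> of_int j + eps)"
  have j: "of_int j \<le> real_of_int k" "real_of_int k \<le> of_int j + eps"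
    using someI_ex[OF ex] unfolding j_def by auto
  then have "k < j + 1" using eps by linarith
  with j have "j = k" by simp
  then show ?thesis unfolding thr_def
    by (subst if_not_P[OF below], subst if_P[OF ex], fold j_def) simp
qed

lemma Ints_dist_lower_bound:
  fixes t :: real
  assumes "t \<notin> \<int>"
  obtains d where "d > 0" "\<And>j::int. \<bar>t - of_int j\<bar> \<ge> d"
proof -
  define d where "d = min (t - of_int \<lfloor>t\<rfloor>) (of_int \<lceil>t\<rceil> - t)"
  have ne: "t \<noteq> of_int \<lfloor>t\<rfloor>" "t \<noteq> of_int \<lceil>t\<rceil>" using assms by (metis Ints_of_int)+
  have "d > 0" unfolding d_def using ne by (simp add: floor_le_iff le_ceiling_iff less_le)
  moreover have "\<lceil>t\<rceil> = \<lfloor>t\<rfloor> + 1" using ne(1) by (metis ceiling_altdef)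
  then have "\<bar>t - of_int j\<bar> \<ge> d" for j :: int
    using of_int_floor_le[of t] le_of_int_ceiling[of t] unfolding d_def
    by (cases "j \<le> \<lfloor>t\<rfloor>") (auto simp flip: of_int_le_iff)
  ultimately show ?thesis using that by blast
qed

text \<open>The limit of \<open>f_N (eps n) (H n) t (x - h n * z)\<close>, which depends on \<open>z \<noteq> 0\<close> only
  through its sign: for \<open>t \<notin> \<int>\<close> the point \<open>x = t\<close> is approached from the right when \<open>z < 0\<close>,
  and then it lies outside \<open>{..t}\<close>.\<close>
definition N_side_limit :: "real \<Rightarrow> real \<Rightarrow> real \<Rightarrow> real" where
  "N_side_limit t z x = (if x \<noteq> 0 \<and> x \<le> t \<and> \<not> (x = t \<and> t \<notin> \<int> \<and> z < 0) then 1 else 0)"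

lemma N_side_limit_average: "(N_side_limit t 1 x + N_side_limit t (-1) x) / 2 = l_lim t x"
  by (auto simp: N_side_limit_def l_lim_def indicator_def)

definition int_window :: "real \<Rightarrow> int set" where
  "int_window R = {j. 0 < \<bar>j\<bar> \<and> of_int \<bar>j\<bar> \<le> R}"

lemma int_window_subset: "int_window R \<subseteq> {-\<lfloor>\<bar>R\<bar>\<rfloor>..\<lfloor>\<bar>R\<bar>\<rfloor>}"
proof
  fix j assume "j \<in> int_window R"
  then have "of_int \<bar>j\<bar> \<le> \<bar>R\<bar>" by (auto simp: int_window_def)
  then have "\<bar>j\<bar> \<le> \<lfloor>\<bar>R\<bar>\<rfloor>" by (simp add: le_floor_iff)
  then show "j \<in> {-\<lfloor>\<bar>R\<bar>\<rfloor>..\<lfloor>\<bar>R\<bar>\<rfloor>}" by auto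
qed

lemma finite_int_window [simp]: "finite (int_window R)"
  using int_window_subset by (rule finite_subset) simp

lemma card_int_window_le: "real (card (int_window R)) \<le> 2 * \<bar>R\<bar> + 1"
proof -
  have "card (int_window R) \<le> card {-\<lfloor>\<bar>R\<bar>\<rfloor>..\<lfloor>\<bar>R\<bar>\<rfloor>}"
    by (intro card_mono int_window_subset) simp
  also have "card {-\<lfloor>\<bar>R\<bar>\<rfloor>..\<lfloor>\<bar>R\<bar>\<rfloor>} = nat (2 * \<lfloor>\<bar>R\<bar>\<rfloor> + 1)" by simp
  finally have "real (card (int_window R)) \<le> 2 * of_int \<lfloor>\<bar>R\<bar>\<rfloor> + 1" by linarith
  then show ?thesis by linarith
qed

lemma sum_f_q_eq:
  assumes "finite J" "eps < 1/2"
  shows "(\<Sum>j\<in>J. Cj j * f_q j eps w) =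
    (if round w \<in> J \<and> \<bar>w - of_int (round w)\<bar> < eps then Cj (round w) else 0)"
proof -
  have "(\<Sum>j\<in>J. Cj j * f_q j eps w) = (\<Sum>j\<in>J. if j = round w then Cj j * f_q j eps w else 0)"
    using assms(2) by (intro sum.cong) (auto simp: f_q_def intro: round_unique' [symmetric])
  with assms(1) show ?thesis by (simp add: f_q_def)
qed

lemma abs_sum_f_q_le:
  assumes "eps < 1/2" "\<And>j. j \<noteq> 0 \<Longrightarrow> \<bar>Cj j\<bar> \<le> B" "0 \<le> B"
  shows "\<bar>\<Sum>j\<in>int_window R. Cj j * f_q j eps w\<bar> \<le> B"
  using assms by (simp add: sum_f_q_eq) (auto simp: int_window_def)

definition int_weight :: "(int \<Rightarrow> real) \<Rightarrow> real \<Rightarrow> real" where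
  "int_weight Cj x = (if x \<in> \<int> \<and> x \<noteq> 0 then Cj (round x) else 0)"

lemma infsum_int_weight: "infsum (\<lambda>j. Cj j * indicator {of_int j} x) (- {0}) = int_weight Cj x"
proof (cases "x \<in> \<int>")
  case True
  then obtain k where k: "x = of_int k" by (auto elim: Ints_cases)
  have "infsum (\<lambda>j. Cj j * indicator {of_int j} x) (- {0})
      = infsum (\<lambda>j. Cj j * indicator {of_int j} x) ({k} - {0})"
    by (rule infsum_cong_neutral) (auto simp: k indicator_def)
  then show ?thesis by (cases "k = 0") (auto simp: k int_weight_def)
next
  case False
  then have "infsum (\<lambda>j. Cj j * indicator {of_int j} x) (- {0}) = 0"
    by (intro infsum_0) (auto simp: indicator_def)
  with False show ?thesis by (simp add: int_weight_def)
qed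

context bandwidths
begin

lemma f_lambda_shift_tendsto:
  "(\<lambda>n. f_lambda (eps n) (H n) (x - h n * z)) \<longlonglongrightarrow> indicator (- {0}) x"
proof (rule tendsto_eventually)
  show "eventually (\<lambda>n. f_lambda (eps n) (H n) (x - h n * z) = indicator (- {0}) x) sequentially"
  proof (cases "x = 0")
    case True
    show ?thesis
      using eventually_abs_h_mult_less_eps[of z]
      by eventually_elim (use True in \<open>auto simp: f_lambda_def\<close>)
  next
    case False
    then have x: "\<bar>x\<bar> / 2 > 0" by simp
    show ?thesis
      using eventually_abs_h_mult_less[OF x, of z] eventually_eps_less[OF x]
        eventually_H_greater[of "2 * \<bar>x\<bar>"]
      by eventually_elim (use False in \<open>auto simp: f_lambda_def\<close>)
  qed
qed

lemma f_q_shift_tendsto: "(\<lambda>n. f_q j (eps n) (x - h n * z)) \<longlonglongrightarrow> indicator {of_int j} x"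
proof (rule tendsto_eventually)
  show "eventually (\<lambda>n. f_q j (eps n) (x - h n * z) = indicator {of_int j} x) sequentially"
  proof (cases "x = of_int j")
    case True
    show ?thesis
      using eventually_abs_h_mult_less_eps[of z]
      by eventually_elim (use True in \<open>auto simp: f_q_def\<close>)
  next
    case False
    then have x: "\<bar>x - of_int j\<bar> / 2 > 0" by simp
    show ?thesis
      using eventually_abs_h_mult_less[OF x, of z] eventually_eps_less[OF x]
      by eventually_elim (use False in \<open>auto simp: f_q_def\<close>)
  qed
qed

lemma f_gamma_shift_tendsto:
  assumes c: "c \<noteq> 0"
  shows "(\<lambda>n. f_gamma c (h n) (x - h n * z)) \<longlonglongrightarrow> 0"
proof (rule tendsto_sandwich[of "\<lambda>n. - (h n / \<bar>c\<bar>)" _ _ "\<lambda>n. h n / \<bar>c\<bar>"])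
  have bound: "\<bar>f_gamma c (h n) (x - h n * z)\<bar> \<le> h n / \<bar>c\<bar>" for n
    by (rule abs_f_gamma_le[OF c h_pos])
  have "- (h n / \<bar>c\<bar>) \<le> f_gamma c (h n) (x - h n * z)"
    and "f_gamma c (h n) (x - h n * z) \<le> h n / \<bar>c\<bar>" for n
    using bound[of n] by linarith+
  then show "eventually (\<lambda>n. - (h n / \<bar>c\<bar>) \<le> f_gamma c (h n) (x - h n * z)) sequentially"
    and "eventually (\<lambda>n. f_gamma c (h n) (x - h n * z) \<le> h n / \<bar>c\<bar>) sequentially"
    by simp_all
  show "(\<lambda>n. h n / \<bar>c\<bar>) \<longlonglongrightarrow> 0" "(\<lambda>n. - (h n / \<bar>c\<bar>)) \<longlonglongrightarrow> 0"
    using tendsto_divide_zero[OF h_lim, of "\<bar>c\<bar>"] tendsto_minus[of _ 0] by auto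
qed

lemma eventually_thr_eq_self:
  assumes "t \<notin> \<int>" shows "eventually (\<lambda>n. thr (eps n) t = t) sequentially"
proof -
  obtain d where d: "d > 0" "\<And>j::int. \<bar>t - of_int j\<bar> \<ge> d"
    using Ints_dist_lower_bound[OF assms] by blast
  from eventually_eps_less[OF d(1)] show ?thesis
    by eventually_elim (meson d(2) less_le_trans thr_eq_self)
qed

lemma eventually_le_thr_iff:
  assumes z: "z \<noteq> 0"
  shows "eventually (\<lambda>n. x - h n * z \<le> thr (eps n) t \<longleftrightarrow> x \<le> t \<and> \<not> (x = t \<and> t \<notin> \<int> \<and> z < 0))
    sequentially"
proof (cases "t \<in> \<int>")
  case True
  then obtain k where t: "t = of_int k" by (auto elim: Ints_cases)
  have thr: "thr (eps n) t = t + eps n" for n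
    unfolding t using eps_pos eps_less_half by (intro thr_of_int)
  show ?thesis
  proof (cases "x \<le> t")
    case True
    show ?thesis using eventually_abs_h_mult_less_eps[of z]
      by eventually_elim (use True \<open>t \<in> \<int>\<close> thr in auto)
  next
    case False
    then have d: "(x - t) / 2 > 0" by simp
    show ?thesis using eventually_abs_h_mult_less[OF d, of z] eventually_eps_less[OF d]
      by eventually_elim (use False thr in auto)
  qed
next
  case False
  note thr = eventually_thr_eq_self[OF False]
  consider "x < t" | "x > t" | "x = t" by linarith
  then show ?thesis
  proof cases
    case 1
    then have "t - x > 0" by simp
    from eventually_abs_h_mult_less[OF this, of z] thr show ?thesis
      by eventually_elim (use 1 in auto)
  next
    case 2
    then have "x - t > 0" by simp
    from eventually_abs_h_mult_less[OF this, of z] thr show ?thesis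
      by eventually_elim (use 2 in auto)
  next
    case 3
    have sign: "h n * z < 0 \<longleftrightarrow> z < 0" for n
      using h_pos[of n] z by (simp add: mult_less_0_iff)
    from thr show ?thesis
    proof eventually_elim
      case (elim n)
      then show ?case using 3 False z sign[of n] by auto
    qed
  qed
qed

lemma f_N_shift_tendsto:
  assumes z: "z \<noteq> 0"
  shows "(\<lambda>n. f_N (eps n) (H n) t (x - h n * z)) \<longlonglongrightarrow> N_side_limit t z x"
proof (rule tendsto_eventually)
  show "eventually (\<lambda>n. f_N (eps n) (H n) t (x - h n * z) = N_side_limit t z x) sequentially"
  proof (cases "x = 0")
    case True
    show ?thesis
      using eventually_abs_h_mult_less_eps[of z]
      by eventually_elim (use True in \<open>auto simp: f_N_def N_side_limit_def\<close>)
  next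
    case False
    then have x: "\<bar>x\<bar> / 2 > 0" by simp
    show ?thesis
      using eventually_abs_h_mult_less[OF x, of z] eventually_eps_less[OF x]
        eventually_H_greater[of "2 * \<bar>x\<bar>"] eventually_le_thr_iff[OF z, of x t]
      by eventually_elim (use False in \<open>auto simp: f_N_def g_N_def N_side_limit_def\<close>)
  qed
qed

lemma window_sum_shift_tendsto:
  assumes "filterlim R at_top sequentially"
  shows "(\<lambda>n. \<Sum>j\<in>int_window (R n). Cj j * f_q j (eps n) (x - h n * z)) \<longlonglongrightarrow> int_weight Cj x"
proof (rule tendsto_eventually)
  have sum_eq: "(\<Sum>j\<in>int_window (R n). Cj j * f_q j (eps n) w) =
      (if round w \<in> int_window (R n) \<and> \<bar>w - of_int (round w)\<bar> < eps n then Cj (round w) else 0)"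
    for n w
    using finite_int_window eps_less_half by (rule sum_f_q_eq)
  show "eventually (\<lambda>n. (\<Sum>j\<in>int_window (R n). Cj j * f_q j (eps n) (x - h n * z)) = int_weight Cj x)
    sequentially"
  proof (cases "x \<in> \<int>")
    case True
    then obtain k where k: "x = of_int k" by (auto elim: Ints_cases)
    have "eventually (\<lambda>n. R n \<ge> of_int \<bar>k\<bar>) sequentially"
      using assms by (simp add: filterlim_at_top)
    with eventually_abs_h_mult_less_eps[of z] show ?thesis
    proof eventually_elim
      case (elim n)
      then have "\<bar>x - h n * z - of_int k\<bar> < 1/2"
        using eps_less_half[of n] k by linarith
      then have "round (x - h n * z) = k" by (rule round_unique')
      then show ?case unfolding sum_eq using elim k by (auto simp: int_window_def int_weight_def)
    qed
  next
    case False
    obtain d where d: "d > 0" "\<And>j::int. \<bar>x - of_int j\<bar> \<ge> d"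
      using Ints_dist_lower_bound[OF False] by blast
    then have "d / 2 > 0" by simp
    from eventually_abs_h_mult_less[OF this, of z] eventually_eps_less[OF this] show ?thesis
    proof eventually_elim
      case (elim n)
      then have "\<not> \<bar>x - h n * z - of_int (round (x - h n * z))\<bar> < eps n"
        using d(2)[of "round (x - h n * z)"] by linarith
      then show ?case unfolding sum_eq using False by (simp add: int_weight_def)
    qed
  qed
qed

end

section \<open>The combined test function\<close>

lemma norm_FT_weighted_sum_le:
  assumes "finite I" "\<And>i. i \<in> I \<Longrightarrow> box_dominated (f i)" "\<And>i. i \<in> I \<Longrightarrow> cmod (FT (f i) u) \<le> b"
  shows "cmod (FT (\<lambda>x. \<Sum>i\<in>I. a i * f i x) u) \<le> (\<Sum>i\<in>I. \<bar>a i\<bar>) * b"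
proof -
  have "FT (\<lambda>x. \<Sum>i\<in>I. a i * f i x) u = (\<Sum>i\<in>I. complex_of_real (a i) * FT (f i) u)"
    using assms(1,2) by (simp add: FT_sum box_dominated_cmult FT_cmult)
  also have "cmod \<dots> \<le> (\<Sum>i\<in>I. \<bar>a i\<bar> * b)"
    by (rule order_trans[OF norm_sum sum_mono]) (simp add: norm_mult assms(3) mult_left_mono)
  finally show ?thesis by (simp add: sum_distrib_right)
qed

lemma f_comb_eq:
  "f_comb c Cl Cg Cj T Ct eps H h R = (\<lambda>x. Cl * f_lambda eps H x + Cg * f_gamma c h x
     + (\<Sum>j\<in>int_window R. Cj j * f_q j eps x) + (\<Sum>t\<in>T. Ct t * f_N eps H t x))"
  by (simp add: f_comb_def int_window_def fun_eq_iff)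

context
  fixes c eps h :: real and T :: "real set"
  assumes c: "c \<noteq> 0" and eps: "0 < eps" "eps < 1/2" and h: "0 < h" and T: "finite T"
begin

lemma box_dominated_f_comb: "box_dominated (f_comb c Cl Cg Cj T Ct eps H h R)"
  unfolding f_comb_eq using c eps h T
  by (intro box_dominated_add box_dominated_sum box_dominated_cmult box_dominated_f_lambda
      box_dominated_f_gamma box_dominated_f_q box_dominated_f_N finite_int_window)

lemma norm_FT_f_comb_le:
  "cmod (FT (f_comb c Cl Cg Cj T Ct eps H h R) u)
     \<le> (2 * \<bar>Cl\<bar> + (\<Sum>j\<in>int_window R. \<bar>Cj j\<bar>) + 2 * (\<Sum>t\<in>T. \<bar>Ct t\<bar>)) * interval_FT_bound (\<bar>H\<bar> + 1) u
       + \<bar>Cg\<bar> * (2 / \<bar>c\<bar>) * h\<^sup>2"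
proof -
  define b where "b = interval_FT_bound (\<bar>H\<bar> + 1) u"
  have triangle: "cmod (a + b + d + e) \<le> cmod a + cmod b + cmod d + cmod e" for a b d e :: complex
    by (meson add_mono norm_triangle_ineq order_refl order_trans)
  have FT_eq: "FT (f_comb c Cl Cg Cj T Ct eps H h R) u
      = complex_of_real Cl * FT (f_lambda eps H) u + complex_of_real Cg * FT (f_gamma c h) u
        + FT (\<lambda>x. \<Sum>j\<in>int_window R. Cj j * f_q j eps x) u
        + FT (\<lambda>x. \<Sum>t\<in>T. Ct t * f_N eps H t x) u"
    unfolding f_comb_eq using c eps h T
    by (simp add: FT_add FT_cmult box_dominated_add box_dominated_sum box_dominated_cmult
        box_dominated_f_lambda box_dominated_f_gamma box_dominated_f_q box_dominated_f_N)
  have "cmod (FT (f_comb c Cl Cg Cj T Ct eps H h R) u)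
      \<le> \<bar>Cl\<bar> * cmod (FT (f_lambda eps H) u) + \<bar>Cg\<bar> * cmod (FT (f_gamma c h) u)
        + cmod (FT (\<lambda>x. \<Sum>j\<in>int_window R. Cj j * f_q j eps x) u)
        + cmod (FT (\<lambda>x. \<Sum>t\<in>T. Ct t * f_N eps H t x) u)"
    unfolding FT_eq by (rule order_trans[OF triangle]) (simp add: norm_mult)
  also have "\<dots> \<le> \<bar>Cl\<bar> * (2 * b) + \<bar>Cg\<bar> * (2 / \<bar>c\<bar> * h\<^sup>2)
        + (\<Sum>j\<in>int_window R. \<bar>Cj j\<bar>) * b + (\<Sum>t\<in>T. \<bar>Ct t\<bar>) * (2 * b)"
    unfolding b_def using c eps h T
    by (intro add_mono mult_left_mono norm_FT_weighted_sum_le norm_FT_f_lambda_le norm_FT_f_gamma_le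
        norm_FT_f_q_le norm_FT_f_N_le box_dominated_f_q box_dominated_f_N finite_int_window) auto
  finally show ?thesis unfolding b_def by (simp add: algebra_simps)
qed

lemma abs_f_comb_le:
  assumes "\<And>j. j \<noteq> 0 \<Longrightarrow> \<bar>Cj j\<bar> \<le> B" "0 \<le> B"
  shows "\<bar>f_comb c Cl Cg Cj T Ct eps H h R x\<bar> \<le> \<bar>Cl\<bar> + \<bar>Cg\<bar> * (h / \<bar>c\<bar>) + B + (\<Sum>t\<in>T. \<bar>Ct t\<bar>)"
proof -
  have "\<bar>\<Sum>t\<in>T. Ct t * f_N eps H t x\<bar> \<le> (\<Sum>t\<in>T. \<bar>Ct t\<bar>)"
    by (rule order_trans[OF sum_abs sum_mono]) (simp add: abs_mult mult_left_le abs_f_N_le)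
  moreover have "\<bar>Cl * f_lambda eps H x\<bar> \<le> \<bar>Cl\<bar>" "\<bar>Cg * f_gamma c h x\<bar> \<le> \<bar>Cg\<bar> * (h / \<bar>c\<bar>)"
    using mult_left_mono[OF abs_f_gamma_le[OF c h], of "\<bar>Cg\<bar>"] abs_f_lambda_le
    by (simp_all add: abs_mult mult_left_le)
  moreover have "\<bar>\<Sum>j\<in>int_window R. Cj j * f_q j eps x\<bar> \<le> B"
    using eps assms by (intro abs_sum_f_q_le)
  ultimately show ?thesis unfolding f_comb_eq by linarith
qed

end

context bandwidths
begin

lemma tendsto_conv_f_lambda:
  "(\<lambda>n. conv (f_lambda (eps n) (H n)) (Kh K (h n)) x) \<longlonglongrightarrow> indicator (- {0}) x"
  using eps_pos by (intro tendsto_conv_Kh[where B = 1] h_pos box_dominated_measurable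
      box_dominated_f_lambda abs_f_lambda_le f_lambda_shift_tendsto)

lemma tendsto_conv_f_q: "(\<lambda>n. conv (f_q j (eps n)) (Kh K (h n)) x) \<longlonglongrightarrow> indicator {of_int j} x"
  by (intro tendsto_conv_Kh[where B = 1] h_pos box_dominated_measurable box_dominated_f_q abs_f_q_le
      f_q_shift_tendsto)

lemma tendsto_conv_f_gamma:
  assumes c: "c \<noteq> 0" shows "(\<lambda>n. conv (f_gamma c (h n)) (Kh K (h n)) x) \<longlonglongrightarrow> 0"
proof -
  obtain h\<^sub>0 where "\<And>n. h n \<le> h\<^sub>0" using h_bounded by blast
  then have "\<bar>f_gamma c (h n) y\<bar> \<le> h\<^sub>0 / \<bar>c\<bar>" for n y
    using abs_f_gamma_le[OF c h_pos, of n y] c by (smt (verit) divide_right_mono abs_ge_zero)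
  then show ?thesis
    using c by (intro tendsto_conv_Kh h_pos f_gamma_measurable f_gamma_shift_tendsto)
qed

lemma tendsto_conv_f_N: "(\<lambda>n. conv (f_N (eps n) (H n) t) (Kh K (h n)) x) \<longlonglongrightarrow> l_lim t x"
proof -
  have "(\<lambda>n. conv (f_N (eps n) (H n) t) (Kh K (h n)) x)
      \<longlonglongrightarrow> (N_side_limit t 1 x + N_side_limit t (-1) x) / 2"
  proof (rule tendsto_conv_Kh_one_sided[where B = 1])
    show "(\<lambda>n. f_N (eps n) (H n) t (x - h n * z)) \<longlonglongrightarrow> N_side_limit t 1 x" if "z > 0" for z
      using f_N_shift_tendsto[of z t x] that by (simp add: N_side_limit_def)
    show "(\<lambda>n. f_N (eps n) (H n) t (x - h n * z)) \<longlonglongrightarrow> N_side_limit t (-1) x" if "z < 0" for z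
      using f_N_shift_tendsto[of z t x] that by (simp add: N_side_limit_def)
  qed (use eps_pos in \<open>auto intro: h_pos box_dominated_measurable box_dominated_f_N abs_f_N_le\<close>)
  then show ?thesis by (simp add: N_side_limit_average)
qed

lemma f_comb_shift_tendsto:
  assumes "c \<noteq> 0" "filterlim R at_top sequentially" "z \<noteq> 0"
  shows "(\<lambda>n. f_comb c Cl Cg Cj T Ct (eps n) (H n) (h n) (R n) (x - h n * z))
    \<longlonglongrightarrow> Cl * indicator (- {0}) x + Cg * 0 + int_weight Cj x + (\<Sum>t\<in>T. Ct t * N_side_limit t z x)"
  unfolding f_comb_eq using assms
  by (intro tendsto_intros f_lambda_shift_tendsto f_gamma_shift_tendsto window_sum_shift_tendsto
      f_N_shift_tendsto)

lemma f_comb_uniformly_bounded: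
  assumes c: "c \<noteq> 0" and T: "finite T" and Cj: "\<And>j. j \<noteq> 0 \<Longrightarrow> \<bar>Cj j\<bar> \<le> B" "0 \<le> B"
  shows "\<exists>M. \<forall>n y. \<bar>f_comb c Cl Cg Cj T Ct (eps n) (H n) (h n) (R n) y\<bar> \<le> M"
proof -
  obtain h\<^sub>0 where h\<^sub>0: "\<And>n. h n \<le> h\<^sub>0" using h_bounded by blast
  have "\<bar>f_comb c Cl Cg Cj T Ct (eps n) (H n) (h n) (R n) y\<bar>
      \<le> \<bar>Cl\<bar> + \<bar>Cg\<bar> * (h n / \<bar>c\<bar>) + B + (\<Sum>t\<in>T. \<bar>Ct t\<bar>)" for n y
    by (rule abs_f_comb_le[OF c eps_pos eps_less_half h_pos T Cj])
  moreover have "\<bar>Cg\<bar> * (h n / \<bar>c\<bar>) \<le> \<bar>Cg\<bar> * (h\<^sub>0 / \<bar>c\<bar>)" for n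
    using h\<^sub>0[of n] by (simp add: mult_left_mono divide_right_mono)
  ultimately show ?thesis by (meson add_mono order_refl order_trans)
qed

lemma tendsto_conv_f_comb:
  assumes c: "c \<noteq> 0" and T: "finite T" and R: "filterlim R at_top sequentially"
    and Cj: "\<And>j. j \<noteq> 0 \<Longrightarrow> \<bar>Cj j\<bar> \<le> B" "0 \<le> B"
  shows "(\<lambda>n. conv (f_comb c Cl Cg Cj T Ct (eps n) (H n) (h n) (R n)) (Kh K (h n)) x)
    \<longlonglongrightarrow> Cl * indicator (- {0}) x + infsum (\<lambda>j. Cj j * indicator {of_int j} x) (- {0})
        + (\<Sum>t\<in>T. Ct t * l_lim t x)"
proof -
  define lim where "lim s = Cl * indicator (- {0}) x + Cg * 0 + int_weight Cj x
    + (\<Sum>t\<in>T. Ct t * N_side_limit t s x)" for s :: real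
  obtain M where bound: "\<And>n y. \<bar>f_comb c Cl Cg Cj T Ct (eps n) (H n) (h n) (R n) y\<bar> \<le> M"
    using f_comb_uniformly_bounded[where Cj = Cj and B = B, OF c T Cj] by blast
  have "(\<lambda>n. conv (f_comb c Cl Cg Cj T Ct (eps n) (H n) (h n) (R n)) (Kh K (h n)) x)
      \<longlonglongrightarrow> (lim 1 + lim (-1)) / 2"
  proof (rule tendsto_conv_Kh_one_sided[OF h_pos box_dominated_measurable bound])
    show "box_dominated (f_comb c Cl Cg Cj T Ct (eps n) (H n) (h n) (R n))" for n
      by (rule box_dominated_f_comb[OF c eps_pos eps_less_half h_pos T])
    show "(\<lambda>n. f_comb c Cl Cg Cj T Ct (eps n) (H n) (h n) (R n) (x - h n * z)) \<longlonglongrightarrow> lim 1"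
      if "z > 0" for z
      using f_comb_shift_tendsto[OF c R, of z] that by (simp add: lim_def N_side_limit_def)
    show "(\<lambda>n. f_comb c Cl Cg Cj T Ct (eps n) (H n) (h n) (R n) (x - h n * z)) \<longlonglongrightarrow> lim (-1)"
      if "z < 0" for z
      using f_comb_shift_tendsto[OF c R, of z] that by (simp add: lim_def N_side_limit_def)
  qed
  moreover have "Ct t * N_side_limit t 1 x + Ct t * N_side_limit t (-1) x = 2 * (Ct t * l_lim t x)"
    for t
    by (simp flip: N_side_limit_average add: algebra_simps)
  then have "(lim 1 + lim (-1)) / 2
      = Cl * indicator (- {0}) x + int_weight Cj x + (\<Sum>t\<in>T. Ct t * l_lim t x)"
    by (simp add: lim_def field_simps sum_distrib_left mult.left_commute flip: sum.distrib)
  ultimately show ?thesis by (simp add: infsum_int_weight)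
qed

end

context bandwidths
begin

context
  fixes \<delta> p q :: real
  assumes \<delta>: "\<delta> > 0" and p: "p > 0" and q: "q \<ge> 0" and exps: "p * (2 + 2 * \<delta>) + q < 1/2"
    and ln_h_le: "eventually (\<lambda>n. ln (1 / h n) \<le> 2 * real n powr p) sequentially"
begin

lemma ln_inverse_h_over_powr_tendsto_zero:
  "(\<lambda>n. ln (1 / h n) / real n powr (1 / (1 + 2 * \<delta>))) \<longlonglongrightarrow> 0"
proof (rule tendsto_log_over_powr_zero[OF p _ _ ln_h_le])
  show "p * (1 + 2 * \<delta>) < 1" using exps p q by (simp add: algebra_simps)
  show "eventually (\<lambda>n. 0 \<le> ln (1 / h n)) sequentially"
    using eventually_ln_inverse_h_ge_1 by eventually_elim simp
qed (use \<delta> in simp)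

lemma FI_eventually_le_rate:
  assumes bound: "eventually (\<lambda>n. \<forall>i\<in>I. \<forall>u\<in>{-(1/h n)..1/h n}.
      cmod (FT (G i n) u) \<le> M n * interval_FT_bound (\<bar>H n\<bar> + 1) u + C n) sequentially"
    and M: "\<And>n. 0 \<le> M n" "eventually (\<lambda>n. M n \<le> A\<^sub>M * real n powr q) sequentially" "0 \<le> A\<^sub>M"
    and C: "\<And>n. 0 \<le> C n" "\<And>n. C n \<le> A\<^sub>C * (h n)\<^sup>2" "0 \<le> A\<^sub>C"
  shows "\<forall>e>0. eventually (\<lambda>n. \<forall>i\<in>I. FI (G i n) (h n) \<le> e * rate h \<delta> n) sequentially"
proof (intro allI impI)
  fix e :: real assume e: "e > 0"
  define L where "L n = ln (1 / h n)" for n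
  define A where "A = 16 * A\<^sub>M + 2 * A\<^sub>C"
  have "eventually (\<lambda>n. A * real n powr q * (L n + 1) * L n powr (1 + 2 * \<delta>) \<le> e * sqrt (real n))
      sequentially"
    using ln_h_le eventually_ln_inverse_h_ge_1 p q \<delta> exps e M(3) C(3)
    by (intro eventually_powr_log_le_sqrt) (auto simp: L_def A_def algebra_simps)
  then show "eventually (\<lambda>n. \<forall>i\<in>I. FI (G i n) (h n) \<le> e * rate h \<delta> n) sequentially"
    using eventually_h_mult_H_less_half bound M(2) eventually_ln_inverse_h_ge_1 eventually_h_less_half
      eventually_ge_at_top[of 1]
  proof eventually_elim
    case (elim n)
    have L_pos: "L n powr (1 + 2 * \<delta>) > 0" using elim by (simp add: L_def)
    have "FI (G i n) (h n) \<le> A * real n powr q * (L n + 1)" if "i \<in> I" for i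
      unfolding A_def L_def
      by (rule FI_le_powr_log[OF h_pos _ _ _ _ q M(1) _ C(1,2)]) (use elim that in auto)
    also have "A * real n powr q * (L n + 1) \<le> e * sqrt (real n) / L n powr (1 + 2 * \<delta>)"
      using elim(1) L_pos by (simp add: pos_le_divide_eq)
    also have "\<dots> = e * rate h \<delta> n"
      using powr_minus_divide[of "L n" "1 + 2 * \<delta>"] by (simp add: rate_def L_def)
    finally show ?case by blast
  qed
qed

lemma eventually_le_mult_powr: "0 \<le> a \<Longrightarrow> eventually (\<lambda>n. a \<le> a * real n powr q) sequentially"
  using eventually_ge_at_top[of 1]
  by eventually_elim
    (use q in \<open>auto intro: mult_left_le ge_one_powr_ge_zero simp: mult_le_cancel_left1\<close>)

lemma props_f_lambda: "props K h \<delta> (\<lambda>(_::unit) n. f_lambda (eps n) (H n)) UNIV"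
proof (rule propsI)
  show "\<forall>e>0. eventually (\<lambda>n. \<forall>i\<in>UNIV. FI (f_lambda (eps n) (H n)) (h n) \<le> e * rate h \<delta> n)
    sequentially"
    using eps_pos norm_FT_f_lambda_le eventually_le_mult_powr[of 2]
    by (intro FI_eventually_le_rate[where M = "\<lambda>_. 2" and C = "\<lambda>_. 0" and A\<^sub>M = 2 and A\<^sub>C = 0]) auto
  show "convergent (\<lambda>n. conv (f_lambda (eps n) (H n)) (Kh K (h n)) x)" for x
    using tendsto_conv_f_lambda by (auto simp: convergent_def)
qed (use eps_pos box_dominated_f_lambda abs_f_lambda_le in blast)+

lemma props_f_gamma:
  assumes c: "c \<noteq> 0" shows "props K h \<delta> (\<lambda>(_::unit) n. f_gamma c (h n)) UNIV"
proof (rule propsI)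
  show "\<forall>e>0. eventually (\<lambda>n. \<forall>i\<in>UNIV. FI (f_gamma c (h n)) (h n) \<le> e * rate h \<delta> n) sequentially"
    using c h_pos norm_FT_f_gamma_le eventually_le_mult_powr[of 0]
    by (intro FI_eventually_le_rate[where M = "\<lambda>_. 0" and C = "\<lambda>n. 2 / \<bar>c\<bar> * (h n)\<^sup>2"
          and A\<^sub>M = 0 and A\<^sub>C = "2 / \<bar>c\<bar>"])
       auto
  obtain h\<^sub>0 where "\<And>n. h n \<le> h\<^sub>0" using h_bounded by blast
  then show "\<exists>B. \<forall>n x. \<bar>f_gamma c (h n) x\<bar> \<le> B"
    using abs_f_gamma_le[OF c h_pos] c by (meson divide_right_mono abs_ge_zero order_trans)
  show "convergent (\<lambda>n. conv (f_gamma c (h n)) (Kh K (h n)) x)" for x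
    using tendsto_conv_f_gamma[OF c] by (auto simp: convergent_def)
qed (use c h_pos box_dominated_f_gamma in blast)

lemma props_f_q: "props K h \<delta> (\<lambda>j n. f_q j (eps n)) {j. j \<noteq> 0}"
proof (rule propsI)
  show "\<forall>e>0. eventually (\<lambda>n. \<forall>j\<in>{j. j \<noteq> 0}. FI (f_q j (eps n)) (h n) \<le> e * rate h \<delta> n)
    sequentially"
    using eps_less_half norm_FT_f_q_le eventually_le_mult_powr[of 1]
    by (intro FI_eventually_le_rate[where M = "\<lambda>_. 1" and C = "\<lambda>_. 0" and A\<^sub>M = 1 and A\<^sub>C = 0]) auto
  show "convergent (\<lambda>n. conv (f_q j (eps n)) (Kh K (h n)) x)" for j x
    using tendsto_conv_f_q by (auto simp: convergent_def)
qed (use box_dominated_f_q abs_f_q_le in blast)+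

lemma props_f_N: "props K h \<delta> (\<lambda>t n. f_N (eps n) (H n) t) UNIV"
proof (rule propsI)
  show "\<forall>e>0. eventually (\<lambda>n. \<forall>t\<in>UNIV. FI (f_N (eps n) (H n) t) (h n) \<le> e * rate h \<delta> n)
    sequentially"
    using eps_pos norm_FT_f_N_le eventually_le_mult_powr[of 2]
    by (intro FI_eventually_le_rate[where M = "\<lambda>_. 2" and C = "\<lambda>_. 0" and A\<^sub>M = 2 and A\<^sub>C = 0]) auto
  show "convergent (\<lambda>n. conv (f_N (eps n) (H n) t) (Kh K (h n)) x)" for t x
    using tendsto_conv_f_N by (auto simp: convergent_def)
qed (use eps_pos box_dominated_f_N abs_f_N_le in blast)+

lemma props_f_comb:
  assumes c: "c \<noteq> 0" and T: "finite T" and R: "filterlim R at_top sequentially"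
    and Cj: "\<And>j. j \<noteq> 0 \<Longrightarrow> \<bar>Cj j\<bar> \<le> B" "0 \<le> B"
    and window: "eventually (\<lambda>n. (\<Sum>j\<in>int_window (R n). \<bar>Cj j\<bar>) \<le> D * real n powr q) sequentially"
  shows "props K h \<delta> (\<lambda>(_::unit) n. f_comb c Cl Cg Cj T Ct (eps n) (H n) (h n) (R n)) UNIV"
proof (rule propsI)
  define M where "M n = 2 * \<bar>Cl\<bar> + (\<Sum>j\<in>int_window (R n). \<bar>Cj j\<bar>) + 2 * (\<Sum>t\<in>T. \<bar>Ct t\<bar>)" for n
  define A where "A = 2 * \<bar>Cl\<bar> + 2 * (\<Sum>t\<in>T. \<bar>Ct t\<bar>)"
  have "0 \<le> A" by (simp add: A_def sum_nonneg)
  have "eventually (\<lambda>n. M n \<le> (A + \<bar>D\<bar>) * real n powr q) sequentially"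
    using window eventually_le_mult_powr[OF \<open>0 \<le> A\<close>]
  proof eventually_elim
    case (elim n)
    moreover have "D * real n powr q \<le> \<bar>D\<bar> * real n powr q" by (simp add: mult_right_mono)
    ultimately show ?case by (simp add: M_def A_def distrib_right)
  qed
  then show "\<forall>e>0. eventually (\<lambda>n. \<forall>i\<in>UNIV.
      FI (f_comb c Cl Cg Cj T Ct (eps n) (H n) (h n) (R n)) (h n) \<le> e * rate h \<delta> n) sequentially"
    using norm_FT_f_comb_le[OF c eps_pos eps_less_half h_pos T]
    by (intro FI_eventually_le_rate[where M = M and C = "\<lambda>n. \<bar>Cg\<bar> * (2 / \<bar>c\<bar>) * (h n)\<^sup>2"
          and A\<^sub>M = "A + \<bar>D\<bar>" and A\<^sub>C = "\<bar>Cg\<bar> * (2 / \<bar>c\<bar>)"])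
       (auto simp: M_def A_def intro: sum_nonneg)
  show "box_dominated (f_comb c Cl Cg Cj T Ct (eps n) (H n) (h n) (R n))" for n
    by (rule box_dominated_f_comb[OF c eps_pos eps_less_half h_pos T])
  show "\<exists>B. \<forall>n x. \<bar>f_comb c Cl Cg Cj T Ct (eps n) (H n) (h n) (R n) x\<bar> \<le> B"
    by (rule f_comb_uniformly_bounded[where Cj = Cj and B = B, OF c T Cj])
  show "convergent (\<lambda>n. conv (f_comb c Cl Cg Cj T Ct (eps n) (H n) (h n) (R n)) (Kh K (h n)) x)"
    for x
    using tendsto_conv_f_comb[where Cj = Cj and B = B and Cl = Cl and Cg = Cg and Ct = Ct and x = x,
        OF c T R Cj]
    unfolding convergent_def ..
qed

end

end

lemma window_sum_bounded_of_finite_support: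
  fixes Cj :: "int \<Rightarrow> real"
  assumes "finite {j. j \<noteq> 0 \<and> Cj j \<noteq> 0}"
  shows "\<exists>B. (\<forall>j. j \<noteq> 0 \<longrightarrow> \<bar>Cj j\<bar> \<le> B) \<and> 0 \<le> B \<and> (\<forall>r. (\<Sum>j\<in>int_window r. \<bar>Cj j\<bar>) \<le> B)"
proof -
  define S where "S = {j. j \<noteq> 0 \<and> Cj j \<noteq> 0}"
  define B where "B = (\<Sum>j\<in>S. \<bar>Cj j\<bar>)"
  have "0 \<le> B" unfolding B_def by (rule sum_nonneg) simp
  moreover have "\<bar>Cj j\<bar> \<le> B" if "j \<noteq> 0" for j
  proof (cases "Cj j = 0")
    case False
    with that assms show ?thesis
      unfolding B_def S_def by (intro member_le_sum) auto
  qed (use \<open>0 \<le> B\<close> in simp)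
  moreover have "(\<Sum>j\<in>int_window r. \<bar>Cj j\<bar>) \<le> B" for r
  proof -
    have "(\<Sum>j\<in>int_window r. \<bar>Cj j\<bar>) = (\<Sum>j\<in>int_window r \<inter> S. \<bar>Cj j\<bar>)"
      by (intro sum.mono_neutral_right finite_int_window) (auto simp: S_def int_window_def)
    also have "\<dots> \<le> B"
      using assms unfolding B_def by (intro sum_mono2) (auto simp: S_def)
    finally show ?thesis .
  qed
  ultimately show ?thesis by (intro exI[of _ B]) simp
qed

lemma window_sum_le_card:
  fixes Cj :: "int \<Rightarrow> real"
  assumes "\<And>j. j \<noteq> 0 \<Longrightarrow> \<bar>Cj j\<bar> \<le> B" "0 \<le> B"
  shows "(\<Sum>j\<in>int_window R. \<bar>Cj j\<bar>) \<le> (2 * \<bar>R\<bar> + 1) * B"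
proof -
  have "(\<Sum>j\<in>int_window R. \<bar>Cj j\<bar>) \<le> of_nat (card (int_window R)) * B"
    using assms(1) by (intro sum_bounded_above) (auto simp: int_window_def)
  also have "\<dots> \<le> (2 * \<bar>R\<bar> + 1) * B"
    using card_int_window_le assms(2) by (rule mult_right_mono)
  finally show ?thesis .
qed

lemma eventually_window_sum_le_powr:
  fixes Cj :: "int \<Rightarrow> real" and R :: "nat \<Rightarrow> real"
  assumes Cj: "\<And>j. j \<noteq> 0 \<Longrightarrow> \<bar>Cj j\<bar> \<le> B" "0 \<le> B"
    and R: "R \<in> O(\<lambda>n. real n powr \<theta>)"
  obtains D
  where "eventually (\<lambda>n. (\<Sum>j\<in>int_window (R n). \<bar>Cj j\<bar>) \<le> D * real n powr max \<theta> 0) sequentially"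
proof -
  obtain c where c: "c > 0" and upper: "eventually (\<lambda>n. \<bar>R n\<bar> \<le> c * real n powr \<theta>) sequentially"
    using R by (elim landau_o.bigE) auto
  have "eventually (\<lambda>n. (\<Sum>j\<in>int_window (R n). \<bar>Cj j\<bar>) \<le> (B * (2 * c + 1)) * real n powr max \<theta> 0)
      sequentially"
    using upper eventually_ge_at_top[of 1]
  proof eventually_elim
    case (elim n)
    have one: "1 \<le> real n powr max \<theta> 0" using elim by (simp add: ge_one_powr_ge_zero)
    have "real n powr \<theta> \<le> real n powr max \<theta> 0"
      using elim by (intro powr_mono) auto
    then have "\<bar>R n\<bar> \<le> c * real n powr max \<theta> 0"
      using elim c by (meson mult_left_mono order_trans less_imp_le)
    then have "2 * \<bar>R n\<bar> + 1 \<le> (2 * c + 1) * real n powr max \<theta> 0"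
      using one by (simp add: algebra_simps)
    from mult_right_mono[OF this Cj(2)]
    have "(2 * \<bar>R n\<bar> + 1) * B \<le> (B * (2 * c + 1)) * real n powr max \<theta> 0"
      by (simp add: mult_ac)
    with window_sum_le_card[OF Cj] show ?case by (rule order_trans)
  qed
  then show ?thesis by (rule that)
qed

lemma comb_coefficients_growth:
  fixes Cj :: "int \<Rightarrow> real" and R :: "nat \<Rightarrow> real"
  assumes \<theta>: "\<theta> < 1/4"
    and "finite {j. j \<noteq> 0 \<and> Cj j \<noteq> 0} \<or>
      (\<exists>\<theta>\<^sub>R. (\<exists>B. \<forall>j. j \<noteq> 0 \<longrightarrow> \<bar>Cj j\<bar> \<le> B) \<and> R \<in> \<Theta>(\<lambda>n. real n powr \<theta>\<^sub>R) \<and>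
            \<theta>\<^sub>R < 1/2 \<and> \<theta> < (1 - 2 * \<theta>\<^sub>R) / 4)"
  shows "\<exists>B q D. (\<forall>j. j \<noteq> 0 \<longrightarrow> \<bar>Cj j\<bar> \<le> B) \<and> 0 \<le> B \<and> 0 \<le> q \<and> q < 1/2 \<and> 2 * \<theta> + q < 1/2 \<and>
    eventually (\<lambda>n. (\<Sum>j\<in>int_window (R n). \<bar>Cj j\<bar>) \<le> D * real n powr q) sequentially"
  using assms(2)
proof
  assume "finite {j. j \<noteq> 0 \<and> Cj j \<noteq> 0}"
  from window_sum_bounded_of_finite_support[OF this] obtain B
    where B: "\<forall>j. j \<noteq> 0 \<longrightarrow> \<bar>Cj j\<bar> \<le> B" "0 \<le> B"
      and window: "\<forall>r. (\<Sum>j\<in>int_window r. \<bar>Cj j\<bar>) \<le> B"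
    by (elim exE conjE)
  have "eventually (\<lambda>n. (\<Sum>j\<in>int_window (R n). \<bar>Cj j\<bar>) \<le> B * real n powr 0) sequentially"
    using eventually_ge_at_top[of "1::nat"] by eventually_elim (simp add: window)
  moreover have "2 * \<theta> + 0 < 1/2" using \<theta> by simp
  ultimately show ?thesis using B by (intro exI[of _ B] exI[of _ 0] exI[of _ B]) auto
next
  assume "\<exists>\<theta>\<^sub>R. (\<exists>B. \<forall>j. j \<noteq> 0 \<longrightarrow> \<bar>Cj j\<bar> \<le> B) \<and> R \<in> \<Theta>(\<lambda>n. real n powr \<theta>\<^sub>R) \<and>
            \<theta>\<^sub>R < 1/2 \<and> \<theta> < (1 - 2 * \<theta>\<^sub>R) / 4"
  then obtain \<theta>\<^sub>R B where B: "\<forall>j. j \<noteq> 0 \<longrightarrow> \<bar>Cj j\<bar> \<le> B" and R: "R \<in> \<Theta>(\<lambda>n. real n powr \<theta>\<^sub>R)"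
    and \<theta>\<^sub>R: "\<theta>\<^sub>R < 1/2" "\<theta> < (1 - 2 * \<theta>\<^sub>R) / 4"
    by blast
  define B' where "B' = max B 0"
  have B': "\<bar>Cj j\<bar> \<le> B'" if "j \<noteq> 0" for j
    using B that unfolding B'_def by (meson max.coboundedI1)
  have "0 \<le> B'" by (simp add: B'_def)
  obtain D
    where "eventually (\<lambda>n. (\<Sum>j\<in>int_window (R n). \<bar>Cj j\<bar>) \<le> D * real n powr max \<theta>\<^sub>R 0) sequentially"
    using eventually_window_sum_le_powr[where Cj = Cj, OF B' \<open>0 \<le> B'\<close> bigthetaD1[OF R]] by blast
  moreover have "2 * \<theta> + max \<theta>\<^sub>R 0 < 1/2"
    using \<theta> \<theta>\<^sub>R by (cases "\<theta>\<^sub>R \<le> 0") (simp_all add: max_def)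
  ultimately show ?thesis using B' \<theta>\<^sub>R
    by (intro exI[of _ B'] exI[of _ "max \<theta>\<^sub>R 0"] exI[of _ D]) (simp add: B'_def)
qed

context bandwidths
begin

lemma test_functions_properties:
  assumes h_rate: "h \<in> \<Theta>(\<lambda>n. exp (- (real n powr \<theta>)))" and \<theta>: "\<theta> < 1/4"
  shows "\<exists>\<delta>>0. (\<lambda>n. ln (1 / h n) / real n powr (1 / (1 + 2 * \<delta>))) \<longlonglongrightarrow> 0 \<and>
    props K h \<delta> (\<lambda>(_::unit) n. f_lambda (eps n) (H n)) UNIV \<and>
    (\<forall>c. c \<noteq> 0 \<longrightarrow> props K h \<delta> (\<lambda>(_::unit) n. f_gamma c (h n)) UNIV) \<and>
    props K h \<delta> (\<lambda>j n. f_q j (eps n)) {j. j \<noteq> 0} \<and>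
    props K h \<delta> (\<lambda>t n. f_N (eps n) (H n) t) UNIV \<and>
    (\<forall>x. (\<lambda>n. conv (f_lambda (eps n) (H n)) (Kh K (h n)) x) \<longlonglongrightarrow> indicator (- {0}) x) \<and>
    (\<forall>c x. c \<noteq> 0 \<longrightarrow> (\<lambda>n. conv (f_gamma c (h n)) (Kh K (h n)) x) \<longlonglongrightarrow> 0) \<and>
    (\<forall>j x. (\<lambda>n. conv (f_q j (eps n)) (Kh K (h n)) x) \<longlonglongrightarrow> indicator {of_int j} x) \<and>
    (\<forall>t x. (\<lambda>n. conv (f_N (eps n) (H n) t) (Kh K (h n)) x) \<longlonglongrightarrow> l_lim t x)"
proof -
  obtain \<delta> p where rate: "\<delta> > 0" "p > 0" "p * (2 + 2 * \<delta>) + 0 < 1/2"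
    "eventually (\<lambda>n. ln (1 / h n) \<le> 2 * real n powr p) sequentially"
    using rate_exponent_exists[OF h_rate h_pos, of 0] \<theta> by auto
  note props = ln_inverse_h_over_powr_tendsto_zero props_f_lambda props_f_gamma props_f_q props_f_N
  show ?thesis
    by (intro exI[of _ \<delta>] conjI allI impI rate(1) props[OF rate(1,2) order_refl rate(3,4)]
        tendsto_conv_f_lambda tendsto_conv_f_gamma tendsto_conv_f_q tendsto_conv_f_N)
qed

lemma f_comb_properties:
  fixes Cj :: "int \<Rightarrow> real" and R :: "nat \<Rightarrow> real"
  assumes h_rate: "h \<in> \<Theta>(\<lambda>n. exp (- (real n powr \<theta>)))" and \<theta>: "\<theta> < 1/4"
    and c: "c \<noteq> 0" and T: "finite T" and R: "filterlim R at_top sequentially"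
    and growth: "finite {j. j \<noteq> 0 \<and> Cj j \<noteq> 0} \<or>
      (\<exists>\<theta>\<^sub>R. (\<exists>B. \<forall>j. j \<noteq> 0 \<longrightarrow> \<bar>Cj j\<bar> \<le> B) \<and> R \<in> \<Theta>(\<lambda>n. real n powr \<theta>\<^sub>R) \<and>
            \<theta>\<^sub>R < 1/2 \<and> \<theta> < (1 - 2 * \<theta>\<^sub>R) / 4)"
  shows "\<exists>\<delta>>0. (\<lambda>n. ln (1 / h n) / real n powr (1 / (1 + 2 * \<delta>))) \<longlonglongrightarrow> 0 \<and>
    props K h \<delta> (\<lambda>(_::unit) n. f_comb c Cl Cg Cj T Ct (eps n) (H n) (h n) (R n)) UNIV \<and>
    (\<forall>x. (\<lambda>n. conv (f_comb c Cl Cg Cj T Ct (eps n) (H n) (h n) (R n)) (Kh K (h n)) x)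
       \<longlonglongrightarrow> Cl * indicator (- {0}) x + infsum (\<lambda>j. Cj j * indicator {of_int j} x) (- {0})
           + (\<Sum>t\<in>T. Ct t * l_lim t x))"
proof -
  obtain B q D where B: "\<forall>j. j \<noteq> 0 \<longrightarrow> \<bar>Cj j\<bar> \<le> B" "0 \<le> B"
    and q: "0 \<le> q" "q < 1/2" "2 * \<theta> + q < 1/2"
    and window: "eventually (\<lambda>n. (\<Sum>j\<in>int_window (R n). \<bar>Cj j\<bar>) \<le> D * real n powr q) sequentially"
    using comb_coefficients_growth[OF \<theta> growth] by blast
  obtain \<delta> p where rate: "\<delta> > 0" "p > 0" "p * (2 + 2 * \<delta>) + q < 1/2"
    "eventually (\<lambda>n. ln (1 / h n) \<le> 2 * real n powr p) sequentially"
    by (rule rate_exponent_exists[OF h_rate h_pos q])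
  note B' = B(1)[rule_format] B(2)
  show ?thesis
    by (intro exI[of _ \<delta>] conjI allI rate(1)
        ln_inverse_h_over_powr_tendsto_zero[OF rate(1,2) q(1) rate(3,4)]
        props_f_comb[OF rate(1,2) q(1) rate(3,4) c T R, where Cj = Cj and B = B, OF B' window]
        tendsto_conv_f_comb[where Cj = Cj and B = B, OF c T R B'])
qed

end

theorem lemma3p7:
  fixes K :: "real \<Rightarrow> real" and h eps H :: "nat \<Rightarrow> real" and theta_h C' \<eta> :: real
  assumes K_meas: "K \<in> borel_measurable borel"
    and K_sym: "\<forall>x. K (- x) = K x"
    and K_int: "integrable lborel K" "(LINT x|lborel. K x) = 1"
    and K_FT: "closure {u. FT K u \<noteq> 0} \<subseteq> {-1..1}"
    and K_decay: "\<eta> > 2" "\<forall>x. \<bar>K x\<bar> \<le> C' * (1 + \<bar>x\<bar>) powr (- \<eta>)"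
    and h_pos: "\<forall>n. h n > 0" and eps_pos: "\<forall>n. eps n > 0"
    and h_lim: "h \<longlonglongrightarrow> 0" and eps_lim: "eps \<longlonglongrightarrow> 0"
    and H_lim: "filterlim H at_top sequentially"
    and h_rate: "h \<in> \<Theta>(\<lambda>n. exp (- (real n powr theta_h)))" and theta_h: "theta_h < 1/4"
    and h_eps: "(\<lambda>n. h n / eps n) \<longlonglongrightarrow> 0"
    and h_H: "(\<lambda>n. h n * H n) \<longlonglongrightarrow> 0"
    and eps_half: "\<forall>n. eps n < 1/2"
    and H_int: "\<forall>n. \<forall>j::int. \<bar>H n - of_int j\<bar> > eps n"
  shows
    "(\<exists>\<delta>>0. (\<lambda>n. ln (1 / h n) / real n powr (1 / (1 + 2 * \<delta>))) \<longlonglongrightarrow> 0 \<and>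
       props K h \<delta> (\<lambda>(_::unit) n. f_lambda (eps n) (H n)) UNIV \<and>
       (\<forall>c. c \<noteq> 0 \<longrightarrow> props K h \<delta> (\<lambda>(_::unit) n. f_gamma c (h n)) UNIV) \<and>
       props K h \<delta> (\<lambda>j n. f_q j (eps n)) {j. j \<noteq> 0} \<and>
       props K h \<delta> (\<lambda>t n. f_N (eps n) (H n) t) UNIV \<and>
       (\<forall>x. (\<lambda>n. conv (f_lambda (eps n) (H n)) (Kh K (h n)) x) \<longlonglongrightarrow> indicator (- {0}) x) \<and>
       (\<forall>c x. c \<noteq> 0 \<longrightarrow> (\<lambda>n. conv (f_gamma c (h n)) (Kh K (h n)) x) \<longlonglongrightarrow> 0) \<and>
       (\<forall>j x. (\<lambda>n. conv (f_q j (eps n)) (Kh K (h n)) x) \<longlonglongrightarrow> indicator {of_int j} x) \<and>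
       (\<forall>t x. (\<lambda>n. conv (f_N (eps n) (H n) t) (Kh K (h n)) x) \<longlonglongrightarrow> l_lim t x))
     \<and>
     (\<forall>c Cl Cg (Cj :: int \<Rightarrow> real) T Ct (Ht :: nat \<Rightarrow> real).
        c \<noteq> 0 \<and> finite T \<and> filterlim Ht at_top sequentially \<and>
        (finite {j. j \<noteq> 0 \<and> Cj j \<noteq> 0} \<or>
         (\<exists>theta_H. (\<exists>B. \<forall>j. j \<noteq> 0 \<longrightarrow> \<bar>Cj j\<bar> \<le> B) \<and> Ht \<in> \<Theta>(\<lambda>n. real n powr theta_H) \<and>
               theta_H < 1/2 \<and> theta_h < (1 - 2 * theta_H) / 4))
        \<longrightarrow>
        (\<exists>\<delta>>0. (\<lambda>n. ln (1 / h n) / real n powr (1 / (1 + 2 * \<delta>))) \<longlonglongrightarrow> 0 \<and>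
           props K h \<delta> (\<lambda>(_::unit) n. f_comb c Cl Cg Cj T Ct (eps n) (H n) (h n) (Ht n)) UNIV \<and>
           (\<forall>x. (\<lambda>n. conv (f_comb c Cl Cg Cj T Ct (eps n) (H n) (h n) (Ht n)) (Kh K (h n)) x)
                 \<longlonglongrightarrow> Cl * indicator (- {0}) x
                     + infsum (\<lambda>j. Cj j * indicator {of_int j} x) (- {0})
                     + (\<Sum>t\<in>T. Ct t * l_lim t x))))"
proof -
  interpret bandwidths K h eps H
    using K_int K_sym h_pos eps_pos eps_half h_lim eps_lim H_lim h_eps h_H by unfold_locales auto
  show ?thesis
  proof (rule conjI, goal_cases)
    case 1
    show ?case by (rule test_functions_properties[OF h_rate theta_h])
  next
    case 2
    show ?case by (intro allI impI, elim conjE) (rule f_comb_properties[OF h_rate theta_h])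
  qed
qed

end
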